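(* In iTML, suppose $T :: \rho,\mu_1,M \Rightarrow \mu_2,R$ and $x, x' \sqsubseteq (\rho,\mu_1,M,T)$. Then $\mathsf{fwd}_T(x \sqcap x') = \mathsf{fwd}_T(x) \sqcap \mathsf{fwd}_T(x')$, where $\mathsf{fwd}_T : \mathrm{Prefix}(\rho,\mu_1,M,T) \to \mathrm{Prefix}(\mu_2,R)$ sends each $(\rho',\mu',M',T')$ to the unique $(\mu'',R'')$ with $\rho',\mu',M',T' \nearrow \mu'',R''$.
   Context: Partial syntax of iTML ($\Box$ a hole). Expressions $e ::= x \mid () \mid \mathsf{inl}\,e \mid \mathsf{inr}\,e \mid (e_1,e_2) \mid \mathsf{fst}\,e \mid \mathsf{snd}\,e \mid \mathsf{fun}\,f(x).M \mid \Box$. Computations $M ::= \mathsf{return}\,e \mid \mathsf{let}\,x = M_1\,\mathsf{in}\,M_2 \mid e_1\,e_2 \mid \mathsf{case}\,e\,\mathsf{of}\,\{\mathsf{inl}\,x \to M_1; \mathsf{inr}\,y \to M_2\} \mid \mathsf{raise}\,e \mid \mathsf{try}\,M_1\,\mathsf{with}\,x \to M_2 \mid \mathsf{ref}\,e \mid e_1 := e_2 \mid !e \mid \Box$. Values $v ::= () \mid \mathsf{inl}\,v \mid \mathsf{inr}\,v \mid (v_1,v_2) \mid \langle\rho,\mathsf{fun}\,f(x).M\rangle \mid \ell \mid \Box$. Environments $\rho$ / stores $\mu$: finitely supported maps from variables / locations to values, regarded as total with value $\Box$ off their domain; $\rho[x\mapsto v]$ extends, $\mu[\ell\mapsto v]$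 updates. Outcomes $k ::= \mathsf{val}\mid\mathsf{exn}$; results $R ::= k\,v$. Traces $T ::= \mathsf{return}\,e \mid \mathsf{let_F}(T) \mid \mathsf{let_S}(T_1,x.T_2) \mid \mathsf{app}(e_1,e_2,f.x.T) \mid \mathsf{caseL}(e,x.T,y) \mid \mathsf{caseR}(e,x,y.T) \mid \mathsf{raise}\,e \mid \mathsf{try_S}(T) \mid \mathsf{try_F}(T_1,x.T_2) \mid \mathsf{ref}_\ell\,e \mid e_1:=_\ell e_2 \mid !_\ell\,e \mid \Box^k_{\mathcal{L}}$ ($\mathcal{L}$ a finite set of locations). $\mathsf{writes}(T)$: $\mathcal{L}$ for $\Box^k_{\mathcal{L}}$; $\emptyset$ for $\mathsf{return}\,e,\mathsf{raise}\,e,!_\ell e$; $\{\ell\}$ for $\mathsf{ref}_\ell e$, $e_1:=_\ell e_2$; union of both subtraces for $\mathsf{let_S}$, $\mathsf{try_F}$; that of the unique subtrace for $\mathsf{let_F},\mathsf{try_S},\mathsf{app},\mathsf{caseL},\mathsf{caseR}$. $\mathsf{outcome}(T)$: $k$ for $\Box^k_{\mathcal{L}}$; $\mathsf{val}$ for $\mathsf{return},\mathsf{try_S},\mathsf{ref}_\ell,:=_\ell,!_\ell$; $\mathsf{exn}$ for $\mathsf{let_F},\mathsf{raise}$; outcome of $T_2$ for $\mathsf{let_S}(T_1,x.T_2),\mathsf{try_F}(T_1,x.T_2)$; outcome of the subtrace for $\mathsf{app},\mathsf{caseL},\mathsf{caseR}$. Order $\sqsubseteq$: on expressions, computations, values the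 least order with $\Box\sqsubseteq t$ closed under constructors componentwise; $k\,v\sqsubseteq k\,v'$ iff $v\sqsubseteq v'$ (same $k$); pointwise on environments and stores; on traces the least order containing $\Box^k_{\mathcal{L}}\sqsubseteq T$ whenever $\mathsf{writes}(T)=\mathcal{L}$ and $\mathsf{outcome}(T)=k$, closed under trace constructors componentwise; componentwise on tuples. $\mathrm{Prefix}(t)=\{t'\mid t'\sqsubseteq t\}$ (a lattice; $\sqcap$ is the meet). Store erasure: $\mu\triangleleft\mathcal{L}$ is $\mu$ with every $\ell\in\mathcal{L}$ mapped to $\Box$. Evaluation (hole-free): $\rho,x\Rightarrow\rho(x)$; $()\Rightarrow()$; $\mathsf{fun}\,f(x).M\Rightarrow\langle\rho,\mathsf{fun}\,f(x).M\rangle$; $\mathsf{inl},\mathsf{inr}$, pairs componentwise; $\mathsf{fst},\mathsf{snd}$ project. $\mathsf{return}\,e::\rho,\mu,\mathsf{return}\,e\Rightarrow\mu,\mathsf{val}\,v$ if $\rho,e\Rightarrow v$; $\mathsf{app}(e_1,e_2,f.x.T)::\rho,\mu,e_1\,e_2\Rightarrow\mu',R$ if $\rho,e_1\Rightarrow v_1=\langle\rho',\mathsf{fun}\,f(x).M\rangle$, $\rho,e_2\Rightarrow v_2$, $T::\rho'[f\mapsto v_1][x\mapsto v_2],\mu,M\Rightarrow\mu',R$; $\mathsf{raise}\,e::\rho,\mu,\mathsf{raise}\,e\Rightarrow\mu,\mathsf{exn}\,v$ if $\rho,e\Rightarrow v$; $\mathsf{ref}_\ell\,e::\rho,\mu,\mathsf{ref}\,e\Rightarrow\mu[\ell\mapsto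 v],\mathsf{val}\,\ell$ if $\rho,e\Rightarrow v$, $\ell\notin\mathrm{dom}\,\mu$; $e_1:=_\ell e_2::\rho,\mu,e_1:=e_2\Rightarrow\mu[\ell\mapsto v],\mathsf{val}\,()$ if $\rho,e_1\Rightarrow\ell$, $\rho,e_2\Rightarrow v$; $!_\ell e::\rho,\mu,!e\Rightarrow\mu,\mathsf{val}\,\mu(\ell)$ if $\rho,e\Rightarrow\ell\in\mathrm{dom}\,\mu$; $\mathsf{let_S}(T_1,x.T_2)::\rho,\mu,\mathsf{let}\,x=M_1\,\mathsf{in}\,M_2\Rightarrow\mu'',R$ if $T_1::\rho,\mu,M_1\Rightarrow\mu',\mathsf{val}\,v$ and $T_2::\rho[x\mapsto v],\mu',M_2\Rightarrow\mu'',R$; $\mathsf{let_F}(T)::\ldots\Rightarrow\mu',\mathsf{exn}\,v$ if $T::\rho,\mu,M_1\Rightarrow\mu',\mathsf{exn}\,v$; $\mathsf{try_F}(T_1,x.T_2)::\rho,\mu,\mathsf{try}\,M_1\,\mathsf{with}\,x\to M_2\Rightarrow\mu'',R$ if $T_1::\rho,\mu,M_1\Rightarrow\mu',\mathsf{exn}\,v$, $T_2::\rho[x\mapsto v],\mu',M_2\Rightarrow\mu'',R$; $\mathsf{try_S}(T_1)::\ldots\Rightarrow\mu',\mathsf{val}\,v$ if $T_1::\rho,\mu,M_1\Rightarrow\mu',\mathsf{val}\,v$; $\mathsf{caseL}(e,x.T,y)::\rho,\mu,\mathsf{case}\,e\,\mathsf{of}\{\mathsf{inl}\,x\to M_1;\mathsf{inr}\,y\to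 M_2\}\Rightarrow\mu',R$ if $\rho,e\Rightarrow\mathsf{inl}\,v$, $T::\rho[x\mapsto v],\mu,M_1\Rightarrow\mu',R$; symmetrically $\mathsf{caseR}(e,x,y.T)$. Expression forward slicing $\rho,e\nearrow v$: $\rho,\Box\nearrow\Box$; $\rho,x\nearrow\rho(x)$; $()\nearrow()$; $\mathsf{fun}\,f(x).M\nearrow\langle\rho,\mathsf{fun}\,f(x).M\rangle$; $\mathsf{inl},\mathsf{inr}$, pairs componentwise; $\mathsf{fst}\,e\nearrow v_1$, $\mathsf{snd}\,e\nearrow v_2$ if $e\nearrow(v_1,v_2)$; both $\nearrow\Box$ if $e\nearrow\Box$. Computation forward slicing $\rho,\mu,M,T\nearrow\mu',R$: (F-Trace$\Box$) $\rho,\mu,M,\Box^k_{\mathcal{L}}\nearrow\mu\triangleleft\mathcal{L},k\,\Box$. (F-Comp$\Box$) $\rho,\mu,\Box,T\nearrow\mu\triangleleft\mathsf{writes}(T),\mathsf{outcome}(T)\,\Box$. (F-Ret) $\rho,e\nearrow v$ ⟹ $\rho,\mu,\mathsf{return}\,e,\mathsf{return}\,e'\nearrow\mu,\mathsf{val}\,v$. (F-Let) $\rho,\mu,M_1,T_1\nearrow\mu',\mathsf{val}\,v$, $\rho[x\mapsto v],\mu',M_2,T_2\nearrow\mu'',R$ ⟹ $\rho,\mu,\mathsf{let}\,x=M_1\,\mathsf{in}\,M_2,\mathsf{let_S}(T_1,x.T_2)\nearrow\mu'',R$. (F-LetFail) $\rho,\mu,M_1,T_1\nearrow\mu',\mathsf{exn}\,v$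 ⟹ $\rho,\mu,\mathsf{let}\,x=M_1\,\mathsf{in}\,M_2,\mathsf{let_F}(T_1)\nearrow\mu',\mathsf{exn}\,v$. (F-CaseL) $\rho,e\nearrow\mathsf{inl}\,v$, $\rho[x\mapsto v],\mu,M_1,T\nearrow\mu',R$ ⟹ $\rho,\mu,\mathsf{case}\,e\,\mathsf{of}\{\mathsf{inl}\,x\to M_1;\mathsf{inr}\,y\to M_2\},\mathsf{caseL}(e',x.T,y)\nearrow\mu',R$; (F-CaseR) symmetric. (F-CaseL$\Box$/F-CaseR$\Box$) $\rho,e\nearrow\Box$ ⟹ case computation with trace $\mathsf{caseL}(e',x.T,y)$ (resp. $\mathsf{caseR}(e',x,y.T)$) $\nearrow\mu\triangleleft\mathsf{writes}(T),\mathsf{outcome}(T)\,\Box$. (F-App) $\rho,e_1\nearrow v_1=\langle\rho',\mathsf{fun}\,f(x).M\rangle$, $\rho,e_2\nearrow v_2$, $\rho'[f\mapsto v_1][x\mapsto v_2],\mu,M,T\nearrow\mu',R$ ⟹ $\rho,\mu,e_1\,e_2,\mathsf{app}(e_1',e_2',f.x.T)\nearrow\mu',R$. (F-App$\Box$) $\rho,e_1\nearrow\Box$ ⟹ $\rho,\mu,e_1\,e_2,\mathsf{app}(e_1',e_2',f.x.T)\nearrow\mu\triangleleft\mathsf{writes}(T),\mathsf{outcome}(T)\,\Box$. (F-Raise) $\rho,e\nearrow v$ ⟹ $\rho,\mu,\mathsf{raise}\,e,\mathsf{raise}\,e'\nearrow\mu,\mathsf{exn}\,v$. (F-Try) $\rho,\mu,M_1,T_1\nearrow\mu',\mathsf{val}\,v$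 ⟹ $\rho,\mu,\mathsf{try}\,M_1\,\mathsf{with}\,x\to M_2,\mathsf{try_S}(T_1)\nearrow\mu',\mathsf{val}\,v$. (F-TryFail) $\rho,\mu,M_1,T_1\nearrow\mu',\mathsf{exn}\,v$, $\rho[x\mapsto v],\mu',M_2,T_2\nearrow\mu'',R$ ⟹ $\rho,\mu,\mathsf{try}\,M_1\,\mathsf{with}\,x\to M_2,\mathsf{try_F}(T_1,x.T_2)\nearrow\mu'',R$. (F-Ref) $\rho,e\nearrow v$ ⟹ $\rho,\mu,\mathsf{ref}\,e,\mathsf{ref}_\ell\,e'\nearrow\mu[\ell\mapsto v],\mathsf{val}\,\ell$. (F-Assign) $\rho,e_1\nearrow\ell$, $\rho,e_2\nearrow v$ ⟹ $\rho,\mu,e_1:=e_2,e_1':=_\ell e_2'\nearrow\mu[\ell\mapsto v],\mathsf{val}\,()$. (F-Assign$\Box$) $\rho,e_1\nearrow\Box$ ⟹ $\ldots\nearrow\mu[\ell\mapsto\Box],\mathsf{val}\,\Box$. (F-Deref) $\rho,e\nearrow\ell$ ⟹ $\rho,\mu,!e,!_\ell e'\nearrow\mu,\mathsf{val}\,\mu(\ell)$. (F-Deref$\Box$) $\rho,e\nearrow\Box$ ⟹ $\rho,\mu,!e,!_\ell e'\nearrow\mu,\mathsf{val}\,\Box$. For $T::\rho,\mu_1,M\Rightarrow\mu_2,R$, every element of $\mathrm{Prefix}(\rho,\mu_1,M,T)$ has exactly one $\nearrow$-image, lying in $\mathrm{Prefix}(\mu_2,R)$. *)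

theory Defs
  imports Main
begin

section \<open>Syntax of (partial) iTML\<close>

type_synonym var = nat
type_synonym loc = nat

datatype exp =
    Var var | EUnit | Inl exp | Inr exp | EPair exp exp | Fst exp | Snd exp
  | Fun var var comp   (* fun f(x).M *)
  | EHole
and comp =
    Return exp | Let var comp comp   (* let x = M1 in M2 *)
  | App exp exp
  | Case exp var comp var comp       (* case e of {inl x -> M1; inr y -> M2} *)
  | Raise exp | Try comp var comp    (* try M1 with x -> M2 *)
  | Ref exp | Assign exp exp | Deref exp
  | CHole

datatype val =
    VUnit | VInl val | VInr val | VPair val val
  | VClo "var \<Rightarrow> val" var var comp   (* <rho, fun f(x).M> *)
  | VLoc loc
  | VHole

type_synonym env = "var \<Rightarrow> val"
type_synonym store = "loc \<Rightarrow> val"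

datatype outcome = OVal | OExn
datatype res = Res outcome val

datatype trace =
    TReturn exp
  | TLetF trace
  | TLetS trace var trace              (* let_S(T1, x.T2) *)
  | TApp exp exp var var trace         (* app(e1, e2, f.x.T) *)
  | TCaseL exp var trace var           (* caseL(e, x.T, y) *)
  | TCaseR exp var var trace           (* caseR(e, x, y.T) *)
  | TRaise exp
  | TTryS trace
  | TTryF trace var trace              (* try_F(T1, x.T2) *)
  | TRef loc exp
  | TAssign exp loc exp
  | TDeref loc exp
  | THole outcome "loc set"

fun writes :: "trace \<Rightarrow> loc set" where
  "writes (THole k L) = L"
| "writes (TReturn e) = {}"
| "writes (TRaise e) = {}"
| "writes (TDeref l e) = {}"
| "writes (TRef l e) = {l}"
| "writes (TAssign e1 l e2) = {l}"
| "writes (TLetS T1 x T2) = writes T1 \<union> writes T2"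
| "writes (TTryF T1 x T2) = writes T1 \<union> writes T2"
| "writes (TLetF T) = writes T"
| "writes (TTryS T) = writes T"
| "writes (TApp e1 e2 f x T) = writes T"
| "writes (TCaseL e x T y) = writes T"
| "writes (TCaseR e x y T) = writes T"

fun trace_outcome :: "trace \<Rightarrow> outcome" where
  "trace_outcome (THole k L) = k"
| "trace_outcome (TReturn e) = OVal"
| "trace_outcome (TTryS T) = OVal"
| "trace_outcome (TRef l e) = OVal"
| "trace_outcome (TAssign e1 l e2) = OVal"
| "trace_outcome (TDeref l e) = OVal"
| "trace_outcome (TLetF T) = OExn"
| "trace_outcome (TRaise e) = OExn"
| "trace_outcome (TLetS T1 x T2) = trace_outcome T2"
| "trace_outcome (TTryF T1 x T2) = trace_outcome T2"
| "trace_outcome (TApp e1 e2 f x T) = trace_outcome T"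
| "trace_outcome (TCaseL e x T y) = trace_outcome T"
| "trace_outcome (TCaseR e x y T) = trace_outcome T"

section \<open>Prefix order\<close>

inductive exp_le :: "exp \<Rightarrow> exp \<Rightarrow> bool"
  and comp_le :: "comp \<Rightarrow> comp \<Rightarrow> bool" where
  "exp_le EHole e"
| "exp_le (Var x) (Var x)"
| "exp_le EUnit EUnit"
| "exp_le e e' \<Longrightarrow> exp_le (Inl e) (Inl e')"
| "exp_le e e' \<Longrightarrow> exp_le (Inr e) (Inr e')"
| "exp_le e1 e1' \<Longrightarrow> exp_le e2 e2' \<Longrightarrow> exp_le (EPair e1 e2) (EPair e1' e2')"
| "exp_le e e' \<Longrightarrow> exp_le (Fst e) (Fst e')"
| "exp_le e e' \<Longrightarrow> exp_le (Snd e) (Snd e')"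
| "comp_le M M' \<Longrightarrow> exp_le (Fun f x M) (Fun f x M')"
| "comp_le CHole M"
| "exp_le e e' \<Longrightarrow> comp_le (Return e) (Return e')"
| "comp_le M1 M1' \<Longrightarrow> comp_le M2 M2' \<Longrightarrow> comp_le (Let x M1 M2) (Let x M1' M2')"
| "exp_le e1 e1' \<Longrightarrow> exp_le e2 e2' \<Longrightarrow> comp_le (App e1 e2) (App e1' e2')"
| "exp_le e e' \<Longrightarrow> comp_le M1 M1' \<Longrightarrow> comp_le M2 M2' \<Longrightarrow>
     comp_le (Case e x M1 y M2) (Case e' x M1' y M2')"
| "exp_le e e' \<Longrightarrow> comp_le (Raise e) (Raise e')"
| "comp_le M1 M1' \<Longrightarrow> comp_le M2 M2' \<Longrightarrow> comp_le (Try M1 x M2) (Try M1' x M2')"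
| "exp_le e e' \<Longrightarrow> comp_le (Ref e) (Ref e')"
| "exp_le e1 e1' \<Longrightarrow> exp_le e2 e2' \<Longrightarrow> comp_le (Assign e1 e2) (Assign e1' e2')"
| "exp_le e e' \<Longrightarrow> comp_le (Deref e) (Deref e')"

inductive val_le :: "val \<Rightarrow> val \<Rightarrow> bool" where
  "val_le VHole v"
| "val_le VUnit VUnit"
| "val_le v v' \<Longrightarrow> val_le (VInl v) (VInl v')"
| "val_le v v' \<Longrightarrow> val_le (VInr v) (VInr v')"
| "val_le v1 v1' \<Longrightarrow> val_le v2 v2' \<Longrightarrow> val_le (VPair v1 v2) (VPair v1' v2')"
| "(\<forall>y. val_le (\<rho> y) (\<rho>' y)) \<Longrightarrow> comp_le M M' \<Longrightarrow> val_le (VClo \<rho> f x M) (VClo \<rho>' f x M')"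
| "val_le (VLoc l) (VLoc l)"

definition env_le :: "env \<Rightarrow> env \<Rightarrow> bool" where
  "env_le \<rho> \<rho>' \<longleftrightarrow> (\<forall>x. val_le (\<rho> x) (\<rho>' x))"

definition store_le :: "store \<Rightarrow> store \<Rightarrow> bool" where
  "store_le \<mu> \<mu>' \<longleftrightarrow> (\<forall>l. val_le (\<mu> l) (\<mu>' l))"

fun res_le :: "res \<Rightarrow> res \<Rightarrow> bool" where
  "res_le (Res k v) (Res k' v') \<longleftrightarrow> k = k' \<and> val_le v v'"

inductive trace_le :: "trace \<Rightarrow> trace \<Rightarrow> bool" where
  "writes T = L \<Longrightarrow> trace_outcome T = k \<Longrightarrow> trace_le (THole k L) T"
| "exp_le e e' \<Longrightarrow> trace_le (TReturn e) (TReturn e')"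
| "trace_le T T' \<Longrightarrow> trace_le (TLetF T) (TLetF T')"
| "trace_le T1 T1' \<Longrightarrow> trace_le T2 T2' \<Longrightarrow> trace_le (TLetS T1 x T2) (TLetS T1' x T2')"
| "exp_le e1 e1' \<Longrightarrow> exp_le e2 e2' \<Longrightarrow> trace_le T T' \<Longrightarrow>
     trace_le (TApp e1 e2 f x T) (TApp e1' e2' f x T')"
| "exp_le e e' \<Longrightarrow> trace_le T T' \<Longrightarrow> trace_le (TCaseL e x T y) (TCaseL e' x T' y)"
| "exp_le e e' \<Longrightarrow> trace_le T T' \<Longrightarrow> trace_le (TCaseR e x y T) (TCaseR e' x y T')"
| "exp_le e e' \<Longrightarrow> trace_le (TRaise e) (TRaise e')"
| "trace_le T T' \<Longrightarrow> trace_le (TTryS T) (TTryS T')"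
| "trace_le T1 T1' \<Longrightarrow> trace_le T2 T2' \<Longrightarrow> trace_le (TTryF T1 x T2) (TTryF T1' x T2')"
| "exp_le e e' \<Longrightarrow> trace_le (TRef l e) (TRef l e')"
| "exp_le e1 e1' \<Longrightarrow> exp_le e2 e2' \<Longrightarrow> trace_le (TAssign e1 l e2) (TAssign e1' l e2')"
| "exp_le e e' \<Longrightarrow> trace_le (TDeref l e) (TDeref l e')"

fun cfg_le :: "env \<times> store \<times> comp \<times> trace \<Rightarrow> env \<times> store \<times> comp \<times> trace \<Rightarrow> bool" where
  "cfg_le (\<rho>, \<mu>, M, T) (\<rho>', \<mu>', M', T') \<longleftrightarrow>
     env_le \<rho> \<rho>' \<and> store_le \<mu> \<mu>' \<and> comp_le M M' \<and> trace_le T T'"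

fun out_le :: "store \<times> res \<Rightarrow> store \<times> res \<Rightarrow> bool" where
  "out_le (\<mu>, R) (\<mu>', R') \<longleftrightarrow> store_le \<mu> \<mu>' \<and> res_le R R'"

definition prefix_meet :: "('a \<Rightarrow> 'a \<Rightarrow> bool) \<Rightarrow> 'a \<Rightarrow> 'a \<Rightarrow> 'a \<Rightarrow> 'a" where
  "prefix_meet le t a b =
     (THE c. le c t \<and> le c a \<and> le c b \<and> (\<forall>d. le d t \<longrightarrow> le d a \<longrightarrow> le d b \<longrightarrow> le d c))"

section \<open>Evaluation (hole-free)\<close>

definition erase :: "store \<Rightarrow> loc set \<Rightarrow> store" where
  "erase \<mu> L = (\<lambda>l. if l \<in> L then VHole else \<mu> l)"

definition sdom :: "store \<Rightarrow> loc set" where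
  "sdom \<mu> = {l. \<mu> l \<noteq> VHole}"

inductive eval_exp :: "env \<Rightarrow> exp \<Rightarrow> val \<Rightarrow> bool" where
  "eval_exp \<rho> (Var x) (\<rho> x)"
| "eval_exp \<rho> EUnit VUnit"
| "eval_exp \<rho> (Fun f x M) (VClo \<rho> f x M)"
| "eval_exp \<rho> e v \<Longrightarrow> eval_exp \<rho> (Inl e) (VInl v)"
| "eval_exp \<rho> e v \<Longrightarrow> eval_exp \<rho> (Inr e) (VInr v)"
| "eval_exp \<rho> e1 v1 \<Longrightarrow> eval_exp \<rho> e2 v2 \<Longrightarrow> eval_exp \<rho> (EPair e1 e2) (VPair v1 v2)"
| "eval_exp \<rho> e (VPair v1 v2) \<Longrightarrow> eval_exp \<rho> (Fst e) v1"
| "eval_exp \<rho> e (VPair v1 v2) \<Longrightarrow> eval_exp \<rho> (Snd e) v2"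

text \<open>eval T rho mu M mu' R  is  T :: rho, mu, M => mu', R.\<close>

inductive eval :: "trace \<Rightarrow> env \<Rightarrow> store \<Rightarrow> comp \<Rightarrow> store \<Rightarrow> res \<Rightarrow> bool" where
  eReturn: "eval_exp \<rho> e v \<Longrightarrow> eval (TReturn e) \<rho> \<mu> (Return e) \<mu> (Res OVal v)"
| eApp: "eval_exp \<rho> e1 v1 \<Longrightarrow> v1 = VClo \<rho>' f x M \<Longrightarrow> eval_exp \<rho> e2 v2 \<Longrightarrow>
     eval T ((\<rho>'(f := v1))(x := v2)) \<mu> M \<mu>' R \<Longrightarrow>
     eval (TApp e1 e2 f x T) \<rho> \<mu> (App e1 e2) \<mu>' R"
| eRaise: "eval_exp \<rho> e v \<Longrightarrow> eval (TRaise e) \<rho> \<mu> (Raise e) \<mu> (Res OExn v)"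
| eRef: "eval_exp \<rho> e v \<Longrightarrow> l \<notin> sdom \<mu> \<Longrightarrow>
     eval (TRef l e) \<rho> \<mu> (Ref e) (\<mu>(l := v)) (Res OVal (VLoc l))"
| eAssign: "eval_exp \<rho> e1 (VLoc l) \<Longrightarrow> eval_exp \<rho> e2 v \<Longrightarrow>
     eval (TAssign e1 l e2) \<rho> \<mu> (Assign e1 e2) (\<mu>(l := v)) (Res OVal VUnit)"
| eDeref: "eval_exp \<rho> e (VLoc l) \<Longrightarrow> l \<in> sdom \<mu> \<Longrightarrow>
     eval (TDeref l e) \<rho> \<mu> (Deref e) \<mu> (Res OVal (\<mu> l))"
| eLetS: "eval T1 \<rho> \<mu> M1 \<mu>' (Res OVal v) \<Longrightarrow> eval T2 (\<rho>(x := v)) \<mu>' M2 \<mu>'' R \<Longrightarrow>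
     eval (TLetS T1 x T2) \<rho> \<mu> (Let x M1 M2) \<mu>'' R"
| eLetF: "eval T \<rho> \<mu> M1 \<mu>' (Res OExn v) \<Longrightarrow>
     eval (TLetF T) \<rho> \<mu> (Let x M1 M2) \<mu>' (Res OExn v)"
| eTryF: "eval T1 \<rho> \<mu> M1 \<mu>' (Res OExn v) \<Longrightarrow> eval T2 (\<rho>(x := v)) \<mu>' M2 \<mu>'' R \<Longrightarrow>
     eval (TTryF T1 x T2) \<rho> \<mu> (Try M1 x M2) \<mu>'' R"
| eTryS: "eval T1 \<rho> \<mu> M1 \<mu>' (Res OVal v) \<Longrightarrow>
     eval (TTryS T1) \<rho> \<mu> (Try M1 x M2) \<mu>' (Res OVal v)"
| eCaseL: "eval_exp \<rho> e (VInl v) \<Longrightarrow> eval T (\<rho>(x := v)) \<mu> M1 \<mu>' R \<Longrightarrow>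
     eval (TCaseL e x T y) \<rho> \<mu> (Case e x M1 y M2) \<mu>' R"
| eCaseR: "eval_exp \<rho> e (VInr v) \<Longrightarrow> eval T (\<rho>(y := v)) \<mu> M2 \<mu>' R \<Longrightarrow>
     eval (TCaseR e x y T) \<rho> \<mu> (Case e x M1 y M2) \<mu>' R"

section \<open>Forward slicing\<close>

inductive fwd_exp :: "env \<Rightarrow> exp \<Rightarrow> val \<Rightarrow> bool" where
  "fwd_exp \<rho> EHole VHole"
| "fwd_exp \<rho> (Var x) (\<rho> x)"
| "fwd_exp \<rho> EUnit VUnit"
| "fwd_exp \<rho> (Fun f x M) (VClo \<rho> f x M)"
| "fwd_exp \<rho> e v \<Longrightarrow> fwd_exp \<rho> (Inl e) (VInl v)"
| "fwd_exp \<rho> e v \<Longrightarrow> fwd_exp \<rho> (Inr e) (VInr v)"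
| "fwd_exp \<rho> e1 v1 \<Longrightarrow> fwd_exp \<rho> e2 v2 \<Longrightarrow> fwd_exp \<rho> (EPair e1 e2) (VPair v1 v2)"
| "fwd_exp \<rho> e (VPair v1 v2) \<Longrightarrow> fwd_exp \<rho> (Fst e) v1"
| "fwd_exp \<rho> e (VPair v1 v2) \<Longrightarrow> fwd_exp \<rho> (Snd e) v2"
| "fwd_exp \<rho> e VHole \<Longrightarrow> fwd_exp \<rho> (Fst e) VHole"
| "fwd_exp \<rho> e VHole \<Longrightarrow> fwd_exp \<rho> (Snd e) VHole"

text \<open>fwd_comp rho mu M T mu' R  is  rho, mu, M, T  forward-slices to  mu', R.\<close>

inductive fwd_comp :: "env \<Rightarrow> store \<Rightarrow> comp \<Rightarrow> trace \<Rightarrow> store \<Rightarrow> res \<Rightarrow> bool" where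
  F_TraceHole: "fwd_comp \<rho> \<mu> M (THole k L) (erase \<mu> L) (Res k VHole)"
| F_CompHole: "fwd_comp \<rho> \<mu> CHole T (erase \<mu> (writes T)) (Res (trace_outcome T) VHole)"
| F_Ret: "fwd_exp \<rho> e v \<Longrightarrow> fwd_comp \<rho> \<mu> (Return e) (TReturn e') \<mu> (Res OVal v)"
| F_Let: "fwd_comp \<rho> \<mu> M1 T1 \<mu>' (Res OVal v) \<Longrightarrow> fwd_comp (\<rho>(x := v)) \<mu>' M2 T2 \<mu>'' R \<Longrightarrow>
     fwd_comp \<rho> \<mu> (Let x M1 M2) (TLetS T1 x T2) \<mu>'' R"
| F_LetFail: "fwd_comp \<rho> \<mu> M1 T1 \<mu>' (Res OExn v) \<Longrightarrow>
     fwd_comp \<rho> \<mu> (Let x M1 M2) (TLetF T1) \<mu>' (Res OExn v)"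
| F_CaseL: "fwd_exp \<rho> e (VInl v) \<Longrightarrow> fwd_comp (\<rho>(x := v)) \<mu> M1 T \<mu>' R \<Longrightarrow>
     fwd_comp \<rho> \<mu> (Case e x M1 y M2) (TCaseL e' x T y) \<mu>' R"
| F_CaseR: "fwd_exp \<rho> e (VInr v) \<Longrightarrow> fwd_comp (\<rho>(y := v)) \<mu> M2 T \<mu>' R \<Longrightarrow>
     fwd_comp \<rho> \<mu> (Case e x M1 y M2) (TCaseR e' x y T) \<mu>' R"
| F_CaseLHole: "fwd_exp \<rho> e VHole \<Longrightarrow>
     fwd_comp \<rho> \<mu> (Case e x M1 y M2) (TCaseL e' x T y) (erase \<mu> (writes T)) (Res (trace_outcome T) VHole)"
| F_CaseRHole: "fwd_exp \<rho> e VHole \<Longrightarrow>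
     fwd_comp \<rho> \<mu> (Case e x M1 y M2) (TCaseR e' x y T) (erase \<mu> (writes T)) (Res (trace_outcome T) VHole)"
| F_App: "fwd_exp \<rho> e1 v1 \<Longrightarrow> v1 = VClo \<rho>' f x M \<Longrightarrow> fwd_exp \<rho> e2 v2 \<Longrightarrow>
     fwd_comp ((\<rho>'(f := v1))(x := v2)) \<mu> M T \<mu>' R \<Longrightarrow>
     fwd_comp \<rho> \<mu> (App e1 e2) (TApp e1' e2' f x T) \<mu>' R"
| F_AppHole: "fwd_exp \<rho> e1 VHole \<Longrightarrow>
     fwd_comp \<rho> \<mu> (App e1 e2) (TApp e1' e2' f x T) (erase \<mu> (writes T)) (Res (trace_outcome T) VHole)"
| F_Raise: "fwd_exp \<rho> e v \<Longrightarrow> fwd_comp \<rho> \<mu> (Raise e) (TRaise e') \<mu> (Res OExn v)"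
| F_Try: "fwd_comp \<rho> \<mu> M1 T1 \<mu>' (Res OVal v) \<Longrightarrow>
     fwd_comp \<rho> \<mu> (Try M1 x M2) (TTryS T1) \<mu>' (Res OVal v)"
| F_TryFail: "fwd_comp \<rho> \<mu> M1 T1 \<mu>' (Res OExn v) \<Longrightarrow> fwd_comp (\<rho>(x := v)) \<mu>' M2 T2 \<mu>'' R \<Longrightarrow>
     fwd_comp \<rho> \<mu> (Try M1 x M2) (TTryF T1 x T2) \<mu>'' R"
| F_Ref: "fwd_exp \<rho> e v \<Longrightarrow> fwd_comp \<rho> \<mu> (Ref e) (TRef l e') (\<mu>(l := v)) (Res OVal (VLoc l))"
| F_Assign: "fwd_exp \<rho> e1 (VLoc l) \<Longrightarrow> fwd_exp \<rho> e2 v \<Longrightarrow>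
     fwd_comp \<rho> \<mu> (Assign e1 e2) (TAssign e1' l e2') (\<mu>(l := v)) (Res OVal VUnit)"
| F_AssignHole: "fwd_exp \<rho> e1 VHole \<Longrightarrow>
     fwd_comp \<rho> \<mu> (Assign e1 e2) (TAssign e1' l e2') (\<mu>(l := VHole)) (Res OVal VHole)"
| F_Deref: "fwd_exp \<rho> e (VLoc l) \<Longrightarrow> fwd_comp \<rho> \<mu> (Deref e) (TDeref l e') \<mu> (Res OVal (\<mu> l))"
| F_DerefHole: "fwd_exp \<rho> e VHole \<Longrightarrow> fwd_comp \<rho> \<mu> (Deref e) (TDeref l e') \<mu> (Res OVal VHole)"

fun fwd :: "env \<times> store \<times> comp \<times> trace \<Rightarrow> store \<times> res" where
  "fwd (\<rho>, \<mu>, M, T) = (THE (\<mu>', R). fwd_comp \<rho> \<mu> M T \<mu>' R)"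

end

theory Submission
  imports Defs
begin

text \<open>Forward slicing is computed by a function \<open>fwd_out\<close> that agrees with the relation
  \<open>fwd_comp\<close> on every prefix of an evaluated configuration, and meets of prefixes are computed
  structurally. By induction on the evaluation, two prefixes either both keep the shape of the
  evaluated computation, so that the induction hypotheses combine, or one of them is a hole --
  of the computation, of the trace, or of a value that the evaluation branches on. In the latter
  case the slices of that prefix and of the meet are both the hole output, and since a slice
  changes the store only at the locations written by the trace, meeting with the hole output
  yields the hole output again.\<close>

section \<open>Meets of prefixes\<close>

primrec exp_meet :: "exp \<Rightarrow> exp \<Rightarrow> exp" and comp_meet :: "comp \<Rightarrow> comp \<Rightarrow> comp" where
  "exp_meet (Var x) b = (case b of Var y \<Rightarrow> if x = y then Var x else EHole | _ \<Rightarrow> EHole)"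
| "exp_meet EUnit b = (case b of EUnit \<Rightarrow> EUnit | _ \<Rightarrow> EHole)"
| "exp_meet (Inl a) b = (case b of Inl c \<Rightarrow> Inl (exp_meet a c) | _ \<Rightarrow> EHole)"
| "exp_meet (Inr a) b = (case b of Inr c \<Rightarrow> Inr (exp_meet a c) | _ \<Rightarrow> EHole)"
| "exp_meet (EPair a1 a2) b =
     (case b of EPair c1 c2 \<Rightarrow> EPair (exp_meet a1 c1) (exp_meet a2 c2) | _ \<Rightarrow> EHole)"
| "exp_meet (Fst a) b = (case b of Fst c \<Rightarrow> Fst (exp_meet a c) | _ \<Rightarrow> EHole)"
| "exp_meet (Snd a) b = (case b of Snd c \<Rightarrow> Snd (exp_meet a c) | _ \<Rightarrow> EHole)"
| "exp_meet (Fun f x M) b = (case b of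
     Fun g y N \<Rightarrow> if f = g \<and> x = y then Fun f x (comp_meet M N) else EHole | _ \<Rightarrow> EHole)"
| "exp_meet EHole b = EHole"
| "comp_meet (Return a) b = (case b of Return c \<Rightarrow> Return (exp_meet a c) | _ \<Rightarrow> CHole)"
| "comp_meet (Let x M1 M2) b = (case b of
     Let y N1 N2 \<Rightarrow> if x = y then Let x (comp_meet M1 N1) (comp_meet M2 N2) else CHole | _ \<Rightarrow> CHole)"
| "comp_meet (App a1 a2) b =
     (case b of App c1 c2 \<Rightarrow> App (exp_meet a1 c1) (exp_meet a2 c2) | _ \<Rightarrow> CHole)"
| "comp_meet (Case a x M1 y M2) b = (case b of
     Case c x' N1 y' N2 \<Rightarrow>
       if x = x' \<and> y = y' then Case (exp_meet a c) x (comp_meet M1 N1) y (comp_meet M2 N2) else CHole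
   | _ \<Rightarrow> CHole)"
| "comp_meet (Raise a) b = (case b of Raise c \<Rightarrow> Raise (exp_meet a c) | _ \<Rightarrow> CHole)"
| "comp_meet (Try M1 x M2) b = (case b of
     Try N1 y N2 \<Rightarrow> if x = y then Try (comp_meet M1 N1) x (comp_meet M2 N2) else CHole | _ \<Rightarrow> CHole)"
| "comp_meet (Ref a) b = (case b of Ref c \<Rightarrow> Ref (exp_meet a c) | _ \<Rightarrow> CHole)"
| "comp_meet (Assign a1 a2) b =
     (case b of Assign c1 c2 \<Rightarrow> Assign (exp_meet a1 c1) (exp_meet a2 c2) | _ \<Rightarrow> CHole)"
| "comp_meet (Deref a) b = (case b of Deref c \<Rightarrow> Deref (exp_meet a c) | _ \<Rightarrow> CHole)"
| "comp_meet CHole b = CHole"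

primrec val_meet :: "val \<Rightarrow> val \<Rightarrow> val" where
  "val_meet VUnit w = (case w of VUnit \<Rightarrow> VUnit | _ \<Rightarrow> VHole)"
| "val_meet (VInl a) w = (case w of VInl b \<Rightarrow> VInl (val_meet a b) | _ \<Rightarrow> VHole)"
| "val_meet (VInr a) w = (case w of VInr b \<Rightarrow> VInr (val_meet a b) | _ \<Rightarrow> VHole)"
| "val_meet (VPair a1 a2) w =
     (case w of VPair b1 b2 \<Rightarrow> VPair (val_meet a1 b1) (val_meet a2 b2) | _ \<Rightarrow> VHole)"
| "val_meet (VClo \<rho> f x M) w = (case w of
     VClo \<rho>' g y N \<Rightarrow>
       if f = g \<and> x = y then VClo (\<lambda>z. val_meet (\<rho> z) (\<rho>' z)) f x (comp_meet M N) else VHole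
   | _ \<Rightarrow> VHole)"
| "val_meet (VLoc l) w = (case w of VLoc l' \<Rightarrow> if l = l' then VLoc l else VHole | _ \<Rightarrow> VHole)"
| "val_meet VHole w = VHole"

definition pointwise_meet :: "('a \<Rightarrow> val) \<Rightarrow> ('a \<Rightarrow> val) \<Rightarrow> 'a \<Rightarrow> val" where
  "pointwise_meet f g = (\<lambda>z. val_meet (f z) (g z))"

fun res_meet :: "res \<Rightarrow> res \<Rightarrow> res" where
  "res_meet (Res k v) (Res k' v') = Res k (val_meet v v')"

definition trace_hole :: "trace \<Rightarrow> trace" where
  "trace_hole T = THole (trace_outcome T) (writes T)"

primrec trace_meet :: "trace \<Rightarrow> trace \<Rightarrow> trace" where
  "trace_meet (THole k L) b = THole k L"
| "trace_meet (TReturn e) b =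
     (case b of TReturn e' \<Rightarrow> TReturn (exp_meet e e') | _ \<Rightarrow> trace_hole (TReturn e))"
| "trace_meet (TRaise e) b =
     (case b of TRaise e' \<Rightarrow> TRaise (exp_meet e e') | _ \<Rightarrow> trace_hole (TRaise e))"
| "trace_meet (TLetF T) b =
     (case b of TLetF T' \<Rightarrow> TLetF (trace_meet T T') | _ \<Rightarrow> trace_hole (TLetF T))"
| "trace_meet (TTryS T) b =
     (case b of TTryS T' \<Rightarrow> TTryS (trace_meet T T') | _ \<Rightarrow> trace_hole (TTryS T))"
| "trace_meet (TLetS T1 x T2) b = (case b of
     TLetS T1' y T2' \<Rightarrow>
       if x = y then TLetS (trace_meet T1 T1') x (trace_meet T2 T2') else trace_hole (TLetS T1 x T2)
   | _ \<Rightarrow> trace_hole (TLetS T1 x T2))"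
| "trace_meet (TTryF T1 x T2) b = (case b of
     TTryF T1' y T2' \<Rightarrow>
       if x = y then TTryF (trace_meet T1 T1') x (trace_meet T2 T2') else trace_hole (TTryF T1 x T2)
   | _ \<Rightarrow> trace_hole (TTryF T1 x T2))"
| "trace_meet (TApp e1 e2 f x T) b = (case b of
     TApp e1' e2' g y T' \<Rightarrow>
       if f = g \<and> x = y then TApp (exp_meet e1 e1') (exp_meet e2 e2') f x (trace_meet T T')
       else trace_hole (TApp e1 e2 f x T)
   | _ \<Rightarrow> trace_hole (TApp e1 e2 f x T))"
| "trace_meet (TCaseL e x T y) b = (case b of
     TCaseL e' x' T' y' \<Rightarrow>
       if x = x' \<and> y = y' then TCaseL (exp_meet e e') x (trace_meet T T') y
       else trace_hole (TCaseL e x T y)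
   | _ \<Rightarrow> trace_hole (TCaseL e x T y))"
| "trace_meet (TCaseR e x y T) b = (case b of
     TCaseR e' x' y' T' \<Rightarrow>
       if x = x' \<and> y = y' then TCaseR (exp_meet e e') x y (trace_meet T T')
       else trace_hole (TCaseR e x y T)
   | _ \<Rightarrow> trace_hole (TCaseR e x y T))"
| "trace_meet (TRef l e) b = (case b of
     TRef l' e' \<Rightarrow> if l = l' then TRef l (exp_meet e e') else trace_hole (TRef l e)
   | _ \<Rightarrow> trace_hole (TRef l e))"
| "trace_meet (TAssign e1 l e2) b = (case b of
     TAssign e1' l' e2' \<Rightarrow>
       if l = l' then TAssign (exp_meet e1 e1') l (exp_meet e2 e2') else trace_hole (TAssign e1 l e2)
   | _ \<Rightarrow> trace_hole (TAssign e1 l e2))"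
| "trace_meet (TDeref l e) b = (case b of
     TDeref l' e' \<Rightarrow> if l = l' then TDeref l (exp_meet e e') else trace_hole (TDeref l e)
   | _ \<Rightarrow> trace_hole (TDeref l e))"

fun cfg_meet ::
  "env \<times> store \<times> comp \<times> trace \<Rightarrow> env \<times> store \<times> comp \<times> trace \<Rightarrow> env \<times> store \<times> comp \<times> trace"
where
  "cfg_meet (\<rho>, \<mu>, M, T) (\<rho>', \<mu>', M', T') =
     (pointwise_meet \<rho> \<rho>', pointwise_meet \<mu> \<mu>', comp_meet M M', trace_meet T T')"

fun out_meet :: "store \<times> res \<Rightarrow> store \<times> res \<Rightarrow> store \<times> res" where
  "out_meet (\<mu>, R) (\<mu>', R') = (pointwise_meet \<mu> \<mu>', res_meet R R')"

inductive_cases exp_leE [elim!]: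
  "exp_le (Var x) b" "exp_le EUnit b" "exp_le (Inl a) b" "exp_le (Inr a) b"
  "exp_le (EPair a1 a2) b" "exp_le (Fst a) b" "exp_le (Snd a) b" "exp_le (Fun f x M) b"
  "exp_le a EHole"
inductive_cases comp_leE [elim!]:
  "comp_le (Return a) b" "comp_le (Let x M1 M2) b" "comp_le (App a1 a2) b"
  "comp_le (Case a x M1 y M2) b" "comp_le (Raise a) b" "comp_le (Try M1 x M2) b"
  "comp_le (Ref a) b" "comp_le (Assign a1 a2) b" "comp_le (Deref a) b" "comp_le M CHole"

lemma exp_comp_le_refl: "exp_le e e" "comp_le M M"
  by (induct e and M) (auto intro: exp_le_comp_le.intros)

lemma exp_comp_le_antisym:
  "exp_le a b \<Longrightarrow> exp_le b a \<Longrightarrow> a = b" "comp_le M N \<Longrightarrow> comp_le N M \<Longrightarrow> M = N"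
  by (induct rule: exp_le_comp_le.inducts) auto

lemma exp_comp_le_trans:
  "exp_le a b \<Longrightarrow> exp_le b c \<Longrightarrow> exp_le a c" "comp_le M N \<Longrightarrow> comp_le N P \<Longrightarrow> comp_le M P"
  by (induct arbitrary: c and P rule: exp_le_comp_le.inducts) (auto intro!: exp_le_comp_le.intros)

lemma exp_comp_meet_le1: "exp_le (exp_meet a b) a" "comp_le (comp_meet M N) M"
  by (induct a and M arbitrary: b and N) (auto intro!: exp_le_comp_le.intros split: exp.splits comp.splits)

lemma exp_comp_meet_le2: "exp_le (exp_meet a b) b" "comp_le (comp_meet M N) N"
  by (induct a and M arbitrary: b and N) (auto intro!: exp_le_comp_le.intros split: exp.splits comp.splits)

lemma exp_comp_meet_greatest:
  "exp_le d a \<Longrightarrow> exp_le d b \<Longrightarrow> exp_le d (exp_meet a b)"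
  "comp_le D M \<Longrightarrow> comp_le D N \<Longrightarrow> comp_le D (comp_meet M N)"
  by (induct arbitrary: b and N rule: exp_le_comp_le.inducts) (auto intro!: exp_le_comp_le.intros)

inductive_cases val_leE [elim!]:
  "val_le VUnit b" "val_le (VInl a) b" "val_le (VInr a) b" "val_le (VPair a1 a2) b"
  "val_le (VClo r f x M) b" "val_le (VLoc l) b" "val_le a VHole"

lemma val_le_antisym: "val_le a b \<Longrightarrow> val_le b a \<Longrightarrow> a = b"
  by (induct rule: val_le.induct) (auto simp: exp_comp_le_antisym)

lemma val_le_trans: "val_le a b \<Longrightarrow> val_le b c \<Longrightarrow> val_le a c"
  by (induct arbitrary: c rule: val_le.induct) (auto intro!: val_le.intros intro: exp_comp_le_trans)

lemma val_meet_le1: "val_le (val_meet a b) a"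
  by (induct a arbitrary: b) (auto intro!: val_le.intros split: val.splits simp: exp_comp_meet_le1)

lemma val_meet_le2: "val_le (val_meet a b) b"
  by (induct a arbitrary: b) (auto intro!: val_le.intros split: val.splits simp: exp_comp_meet_le2)

lemma val_meet_greatest: "val_le d a \<Longrightarrow> val_le d b \<Longrightarrow> val_le d (val_meet a b)"
  by (induct arbitrary: b rule: val_le.induct) (auto intro!: val_le.intros simp: exp_comp_meet_greatest)


inductive_cases trace_leE [elim!]:
  "trace_le (TReturn e) b" "trace_le (TRaise e) b" "trace_le (TLetF T) b"
  "trace_le (TTryS T) b" "trace_le (TLetS T1 x T2) b" "trace_le (TTryF T1 x T2) b"
  "trace_le (TApp e1 e2 f x T) b" "trace_le (TCaseL e x T y) b" "trace_le (TCaseR e x y T) b"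
  "trace_le (TRef l e) b" "trace_le (TAssign e1 l e2) b" "trace_le (TDeref l e) b"

inductive_cases trace_le_upperE:
  "trace_le b (THole k L)" "trace_le b (TReturn e)" "trace_le b (TRaise e)" "trace_le b (TLetF T)"
  "trace_le b (TTryS T)" "trace_le b (TLetS T1 x T2)" "trace_le b (TTryF T1 x T2)"
  "trace_le b (TApp e1 e2 f x T)" "trace_le b (TCaseL e x T y)" "trace_le b (TCaseR e x y T)"
  "trace_le b (TRef l e)" "trace_le b (TAssign e1 l e2)" "trace_le b (TDeref l e)"

lemma trace_le_writes_outcome:
  assumes "trace_le a b"
  shows "writes a = writes b" "trace_outcome a = trace_outcome b"
  using assms by (induct rule: trace_le.induct) auto

lemma THole_le_iff [simp]: "trace_le (THole k L) T \<longleftrightarrow> writes T = L \<and> trace_outcome T = k"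
  by (auto elim: trace_le.cases intro: trace_le.intros)

lemma trace_le_refl: "trace_le T T"
  by (induct T) (auto intro!: trace_le.intros(2-) simp: exp_comp_le_refl)

lemma trace_le_antisym: "trace_le a b \<Longrightarrow> trace_le b a \<Longrightarrow> a = b"
  by (induct rule: trace_le.induct) (auto elim!: trace_le_upperE simp: exp_comp_le_antisym)

lemma trace_le_trans: "trace_le a b \<Longrightarrow> trace_le b c \<Longrightarrow> trace_le a c"
  by (induct arbitrary: c rule: trace_le.induct)
    (auto intro!: trace_le.intros(2-) intro: exp_comp_le_trans simp: trace_le_writes_outcome)

lemma trace_meet_le1: "trace_le (trace_meet a b) a"
  by (induct a arbitrary: b)
    (auto intro!: trace_le.intros(2-) split: trace.splits
      simp: trace_hole_def exp_comp_meet_le1 trace_le_refl)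

lemma writes_outcome_trace_meet [simp]:
  "writes (trace_meet a b) = writes a" "trace_outcome (trace_meet a b) = trace_outcome a"
  using trace_le_writes_outcome[OF trace_meet_le1] by auto

text \<open>Unlike the other meets, that of traces is only a lower bound of its second argument when
  both have a common upper bound: a hole records the writes and outcome of the trace it replaces.\<close>

lemma trace_meet_le2: "trace_le a t \<Longrightarrow> trace_le b t \<Longrightarrow> trace_le (trace_meet a b) b"
proof (induct arbitrary: b rule: trace_le.induct)
  case (1 T L k)
  then show ?case using trace_le_writes_outcome[of b T] by auto
qed (auto elim!: trace_le_upperE intro!: trace_le.intros(2-)
      simp: trace_hole_def exp_comp_meet_le2 trace_le_writes_outcome)

lemma trace_meet_greatest:
  "trace_le a t \<Longrightarrow> trace_le b t \<Longrightarrow> trace_le d a \<Longrightarrow> trace_le d b \<Longrightarrow> trace_le d (trace_meet a b)"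
  by (induct arbitrary: b d rule: trace_le.induct)
    (auto elim!: trace_le_upperE intro!: trace_le.intros(2-)
      simp: trace_hole_def exp_comp_meet_greatest trace_le_writes_outcome)

lemma pointwise_meet_apply: "pointwise_meet f g z = val_meet (f z) (g z)"
  by (simp add: pointwise_meet_def)

lemma pointwise_le_antisym: "\<forall>z. val_le (f z) (g z) \<Longrightarrow> \<forall>z. val_le (g z) (f z) \<Longrightarrow> f = g"
  by (auto intro: val_le_antisym)

lemma res_le_antisym: "res_le R R' \<Longrightarrow> res_le R' R \<Longrightarrow> R = R'"
  by (cases R; cases R') (auto intro: val_le_antisym)

lemma prefix_meet_eqI:
  assumes "\<And>x y. le x y \<Longrightarrow> le y x \<Longrightarrow> x = y"
    and "le m t" "le m a" "le m b" "\<And>d. le d t \<Longrightarrow> le d a \<Longrightarrow> le d b \<Longrightarrow> le d m"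
  shows "prefix_meet le t a b = m"
  unfolding prefix_meet_def by (rule the_equality) (use assms in blast)+

lemma cfg_le_antisym: "cfg_le c c' \<Longrightarrow> cfg_le c' c \<Longrightarrow> c = c'"
  by (cases c; cases c')
    (auto simp: env_le_def store_le_def
      intro: pointwise_le_antisym exp_comp_le_antisym trace_le_antisym)

lemma cfg_le_trans: "cfg_le c c' \<Longrightarrow> cfg_le c' c'' \<Longrightarrow> cfg_le c c''"
  by (cases c; cases c'; cases c'')
    (auto simp: env_le_def store_le_def intro: val_le_trans exp_comp_le_trans trace_le_trans)

lemma out_le_antisym: "out_le p q \<Longrightarrow> out_le q p \<Longrightarrow> p = q"
  by (cases p; cases q) (auto simp: store_le_def intro: pointwise_le_antisym res_le_antisym)

lemma cfg_meet_le1: "cfg_le (cfg_meet c c') c"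
  by (cases c; cases c')
    (auto simp: env_le_def store_le_def pointwise_meet_apply val_meet_le1 exp_comp_meet_le1
      trace_meet_le1)

lemma prefix_meet_cfg:
  assumes "cfg_le c t" "cfg_le c' t"
  shows "prefix_meet cfg_le t c c' = cfg_meet c c'"
proof (rule prefix_meet_eqI[OF cfg_le_antisym])
  obtain \<rho> \<mu> M T where t: "t = (\<rho>, \<mu>, M, T)" by (cases t)
  obtain \<rho>1 \<mu>1 M1 T1 where c: "c = (\<rho>1, \<mu>1, M1, T1)" by (cases c)
  obtain \<rho>2 \<mu>2 M2 T2 where c': "c' = (\<rho>2, \<mu>2, M2, T2)" by (cases c')
  show "cfg_le (cfg_meet c c') c" by (rule cfg_meet_le1)
  then show "cfg_le (cfg_meet c c') t" using assms(1) by (rule cfg_le_trans)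
  show "cfg_le (cfg_meet c c') c'"
    using assms unfolding t c c'
    by (auto simp: env_le_def store_le_def pointwise_meet_apply val_meet_le2 exp_comp_meet_le2
        intro: trace_meet_le2)
  fix d assume "cfg_le d t" "cfg_le d c" "cfg_le d c'"
  then show "cfg_le d (cfg_meet c c')"
    using assms unfolding t c c'
    by (cases d) (auto simp: env_le_def store_le_def pointwise_meet_apply
        intro: val_meet_greatest exp_comp_meet_greatest trace_meet_greatest)
qed

lemma prefix_meet_out:
  assumes "out_le p t" "out_le q t"
  shows "prefix_meet out_le t p q = out_meet p q"
proof (rule prefix_meet_eqI[OF out_le_antisym])
  obtain \<mu> k v where t: "t = (\<mu>, Res k v)" by (metis res.exhaust surj_pair)
  obtain \<mu>1 k1 v1 where p: "p = (\<mu>1, Res k1 v1)" by (metis res.exhaust surj_pair)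
  obtain \<mu>2 k2 v2 where q: "q = (\<mu>2, Res k2 v2)" by (metis res.exhaust surj_pair)
  show "out_le (out_meet p q) p"
    unfolding p q by (simp add: store_le_def pointwise_meet_apply val_meet_le1)
  then show "out_le (out_meet p q) t"
    using assms(1) unfolding t p q by (auto simp: store_le_def intro: val_le_trans)
  show "out_le (out_meet p q) q"
    using assms unfolding t p q by (simp add: store_le_def pointwise_meet_apply val_meet_le2)
  fix d assume "out_le d t" "out_le d p" "out_le d q"
  then show "out_le d (out_meet p q)"
    using assms unfolding t p q
    by (cases d) (auto simp: store_le_def pointwise_meet_apply intro: val_meet_greatest
        elim!: res_le.elims)
qed

section \<open>Forward slicing as a function\<close>

primrec fwd_val :: "env \<Rightarrow> exp \<Rightarrow> val" where
  "fwd_val \<rho> (Var x) = \<rho> x"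
| "fwd_val \<rho> EUnit = VUnit"
| "fwd_val \<rho> (Inl e) = VInl (fwd_val \<rho> e)"
| "fwd_val \<rho> (Inr e) = VInr (fwd_val \<rho> e)"
| "fwd_val \<rho> (EPair e1 e2) = VPair (fwd_val \<rho> e1) (fwd_val \<rho> e2)"
| "fwd_val \<rho> (Fst e) = (case fwd_val \<rho> e of VPair a b \<Rightarrow> a | _ \<Rightarrow> VHole)"
| "fwd_val \<rho> (Snd e) = (case fwd_val \<rho> e of VPair a b \<Rightarrow> b | _ \<Rightarrow> VHole)"
| "fwd_val \<rho> (Fun f x M) = VClo \<rho> f x M"
| "fwd_val \<rho> EHole = VHole"

inductive_cases exp_le_upperE:
  "exp_le e (Var x)" "exp_le e EUnit" "exp_le e (Inl e0)" "exp_le e (Inr e0)"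
  "exp_le e (EPair e1 e2)" "exp_le e (Fst e0)" "exp_le e (Snd e0)" "exp_le e (Fun f x M)"
inductive_cases comp_le_upperE:
  "comp_le M (Return e)" "comp_le M (Let x M1 M2)" "comp_le M (App e1 e2)"
  "comp_le M (Case e x M1 y M2)" "comp_le M (Raise e)" "comp_le M (Try M1 x M2)"
  "comp_le M (Ref e)" "comp_le M (Assign e1 e2)" "comp_le M (Deref e)"
inductive_cases val_le_upperE:
  "val_le a (VInl v)" "val_le a (VInr v)" "val_le a (VPair v1 v2)" "val_le a (VClo \<rho> f x M)"
  "val_le a (VLoc l)"

lemma fwd_exp_fwd_val: "fwd_exp \<rho> e v \<Longrightarrow> fwd_val \<rho> e = v"
  by (induct rule: fwd_exp.induct) auto

lemma fwd_exp_below_eval: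
  assumes "eval_exp \<rho>0 e0 v0" "exp_le e e0" "env_le \<rho> \<rho>0"
  shows "fwd_exp \<rho> e (fwd_val \<rho> e) \<and> val_le (fwd_val \<rho> e) v0"
  using assms
proof (induction arbitrary: e rule: eval_exp.induct)
  case (7 \<rho>0 e0 v1 v2)
  show ?case
  proof (cases "e = EHole")
    case False
    then obtain e1 where e: "e = Fst e1" "exp_le e1 e0" using "7.prems" by (auto elim: exp_le_upperE)
    with "7.IH" "7.prems" have "fwd_exp \<rho> e1 (fwd_val \<rho> e1)" "val_le (fwd_val \<rho> e1) (VPair v1 v2)"
      by auto
    then show ?thesis using e by (auto elim!: val_le_upperE intro: fwd_exp.intros val_le.intros)
  qed (auto intro: fwd_exp.intros val_le.intros)
next
  case (8 \<rho>0 e0 v1 v2)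
  show ?case
  proof (cases "e = EHole")
    case False
    then obtain e1 where e: "e = Snd e1" "exp_le e1 e0" using "8.prems" by (auto elim: exp_le_upperE)
    with "8.IH" "8.prems" have "fwd_exp \<rho> e1 (fwd_val \<rho> e1)" "val_le (fwd_val \<rho> e1) (VPair v1 v2)"
      by auto
    then show ?thesis using e by (auto elim!: val_le_upperE intro: fwd_exp.intros val_le.intros)
  qed (auto intro: fwd_exp.intros val_le.intros)
qed (fastforce elim!: exp_le_upperE intro!: fwd_exp.intros val_le.intros
      simp: env_le_def exp_comp_le_refl)+

lemma val_meet_VHole [simp]: "val_meet a VHole = VHole"
  by (cases a) auto

lemma exp_comp_meet_hole [simp]: "exp_meet a EHole = EHole" "comp_meet M CHole = CHole"
  by (cases a; simp) (cases M; simp)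

lemma fwd_val_meet:
  assumes "eval_exp \<rho>0 e0 v0" "exp_le e e0" "exp_le e' e0" "env_le \<rho> \<rho>0" "env_le \<rho>' \<rho>0"
  shows "fwd_val (pointwise_meet \<rho> \<rho>') (exp_meet e e') = val_meet (fwd_val \<rho> e) (fwd_val \<rho>' e')"
  using assms
proof (induction arbitrary: e e' rule: eval_exp.induct)
  case (7 \<rho>0 e0 v1 v2)
  consider "e = EHole" | "e' = EHole"
    | e1 e1' where "e = Fst e1" "exp_le e1 e0" "e' = Fst e1'" "exp_le e1' e0"
    using "7.prems" by (auto elim!: exp_le_upperE)
  then show ?case
  proof cases
    case 3
    with "7.IH" "7.prems" fwd_exp_below_eval[OF "7.hyps"]
    have "fwd_val (pointwise_meet \<rho> \<rho>') (exp_meet e1 e1') = val_meet (fwd_val \<rho> e1) (fwd_val \<rho>' e1')"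
      "val_le (fwd_val \<rho> e1) (VPair v1 v2)" "val_le (fwd_val \<rho>' e1') (VPair v1 v2)"
      by auto
    then show ?thesis using 3 by (auto elim!: val_le_upperE)
  qed auto
next
  case (8 \<rho>0 e0 v1 v2)
  consider "e = EHole" | "e' = EHole"
    | e1 e1' where "e = Snd e1" "exp_le e1 e0" "e' = Snd e1'" "exp_le e1' e0"
    using "8.prems" by (auto elim!: exp_le_upperE)
  then show ?case
  proof cases
    case 3
    with "8.IH" "8.prems" fwd_exp_below_eval[OF "8.hyps"]
    have "fwd_val (pointwise_meet \<rho> \<rho>') (exp_meet e1 e1') = val_meet (fwd_val \<rho> e1) (fwd_val \<rho>' e1')"
      "val_le (fwd_val \<rho> e1) (VPair v1 v2)" "val_le (fwd_val \<rho>' e1') (VPair v1 v2)"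
      by auto
    then show ?thesis using 3 by (auto elim!: val_le_upperE)
  qed auto
qed (auto elim!: exp_le_upperE simp: pointwise_meet_def)


definition hole_out :: "trace \<Rightarrow> store \<Rightarrow> store \<times> res" where
  "hole_out T \<mu> = (erase \<mu> (writes T), Res (trace_outcome T) VHole)"

text \<open>Configurations whose computation and trace do not match fall back to the hole output;
  they never occur below an evaluation.\<close>

primrec fwd_out :: "trace \<Rightarrow> env \<Rightarrow> store \<Rightarrow> comp \<Rightarrow> store \<times> res" where
  "fwd_out (THole k L) \<rho> \<mu> M = (erase \<mu> L, Res k VHole)"
| "fwd_out (TReturn e') \<rho> \<mu> M =
     (case M of Return e \<Rightarrow> (\<mu>, Res OVal (fwd_val \<rho> e)) | _ \<Rightarrow> hole_out (TReturn e') \<mu>)"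
| "fwd_out (TRaise e') \<rho> \<mu> M =
     (case M of Raise e \<Rightarrow> (\<mu>, Res OExn (fwd_val \<rho> e)) | _ \<Rightarrow> hole_out (TRaise e') \<mu>)"
| "fwd_out (TLetF T) \<rho> \<mu> M =
     (case M of Let x M1 M2 \<Rightarrow> fwd_out T \<rho> \<mu> M1 | _ \<Rightarrow> hole_out (TLetF T) \<mu>)"
| "fwd_out (TTryS T) \<rho> \<mu> M =
     (case M of Try M1 x M2 \<Rightarrow> fwd_out T \<rho> \<mu> M1 | _ \<Rightarrow> hole_out (TTryS T) \<mu>)"
| "fwd_out (TLetS T1 x T2) \<rho> \<mu> M = (case M of
     Let y M1 M2 \<Rightarrow> (case fwd_out T1 \<rho> \<mu> M1 of (\<mu>', Res k v) \<Rightarrow> fwd_out T2 (\<rho>(x := v)) \<mu>' M2)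
   | _ \<Rightarrow> hole_out (TLetS T1 x T2) \<mu>)"
| "fwd_out (TTryF T1 x T2) \<rho> \<mu> M = (case M of
     Try M1 y M2 \<Rightarrow> (case fwd_out T1 \<rho> \<mu> M1 of (\<mu>', Res k v) \<Rightarrow> fwd_out T2 (\<rho>(x := v)) \<mu>' M2)
   | _ \<Rightarrow> hole_out (TTryF T1 x T2) \<mu>)"
| "fwd_out (TApp e1' e2' f x T) \<rho> \<mu> M = (case M of
     App e1 e2 \<Rightarrow> (case fwd_val \<rho> e1 of
         VClo \<rho>' g y Mb \<Rightarrow> fwd_out T ((\<rho>'(f := fwd_val \<rho> e1))(x := fwd_val \<rho> e2)) \<mu> Mb
       | _ \<Rightarrow> hole_out (TApp e1' e2' f x T) \<mu>)
   | _ \<Rightarrow> hole_out (TApp e1' e2' f x T) \<mu>)"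
| "fwd_out (TCaseL e' x T y) \<rho> \<mu> M = (case M of
     Case e x' M1 y' M2 \<Rightarrow> (case fwd_val \<rho> e of
         VInl v \<Rightarrow> fwd_out T (\<rho>(x := v)) \<mu> M1
       | _ \<Rightarrow> hole_out (TCaseL e' x T y) \<mu>)
   | _ \<Rightarrow> hole_out (TCaseL e' x T y) \<mu>)"
| "fwd_out (TCaseR e' x y T) \<rho> \<mu> M = (case M of
     Case e x' M1 y' M2 \<Rightarrow> (case fwd_val \<rho> e of
         VInr v \<Rightarrow> fwd_out T (\<rho>(y := v)) \<mu> M2
       | _ \<Rightarrow> hole_out (TCaseR e' x y T) \<mu>)
   | _ \<Rightarrow> hole_out (TCaseR e' x y T) \<mu>)"
| "fwd_out (TRef l e') \<rho> \<mu> M = (case M of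
     Ref e \<Rightarrow> (\<mu>(l := fwd_val \<rho> e), Res OVal (VLoc l))
   | _ \<Rightarrow> hole_out (TRef l e') \<mu>)"
| "fwd_out (TAssign e1' l e2') \<rho> \<mu> M = (case M of
     Assign e1 e2 \<Rightarrow> (case fwd_val \<rho> e1 of
         VHole \<Rightarrow> (\<mu>(l := VHole), Res OVal VHole)
       | _ \<Rightarrow> (\<mu>(l := fwd_val \<rho> e2), Res OVal VUnit))
   | _ \<Rightarrow> hole_out (TAssign e1' l e2') \<mu>)"
| "fwd_out (TDeref l e') \<rho> \<mu> M = (case M of
     Deref e \<Rightarrow> (case fwd_val \<rho> e of
         VHole \<Rightarrow> (\<mu>, Res OVal VHole)
       | _ \<Rightarrow> (\<mu>, Res OVal (\<mu> l)))
   | _ \<Rightarrow> hole_out (TDeref l e') \<mu>)"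

lemma fwd_comp_fwd_out: "fwd_comp \<rho> \<mu> M T \<mu>' R \<Longrightarrow> fwd_out T \<rho> \<mu> M = (\<mu>', R)"
proof (induct rule: fwd_comp.induct)
  case (F_CompHole \<rho> \<mu> T)
  then show ?case by (cases T) (auto simp: hole_out_def)
qed (auto simp: hole_out_def fun_upd_def dest!: fwd_exp_fwd_val)

definition hole_head :: "comp \<Rightarrow> trace \<Rightarrow> bool" where
  "hole_head M T \<longleftrightarrow> M = CHole \<or> (\<exists>k L. T = THole k L)"

lemma fwd_out_hole_head: "hole_head M T \<Longrightarrow> fwd_out T \<rho> \<mu> M = hole_out T \<mu>"
  by (cases T) (auto simp: hole_head_def hole_out_def)

lemma fwd_comp_hole_head:
  "hole_head M T \<Longrightarrow> fwd_comp \<rho> \<mu> M T (erase \<mu> (writes T)) (Res (trace_outcome T) VHole)"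
  by (auto simp: hole_head_def intro: fwd_comp.intros)

lemma hole_head_meet:
  "hole_head M T \<or> hole_head M' T' \<Longrightarrow> hole_head (comp_meet M M') (trace_meet T T')"
proof -
  have "\<exists>k L. trace_meet T (THole k' L') = THole k L" for k' L'
    by (cases T) (auto simp: trace_hole_def)
  then show "hole_head M T \<or> hole_head M' T' \<Longrightarrow> ?thesis"
    by (auto simp: hole_head_def)
qed

lemma hole_out_trace_le: "trace_le T T0 \<Longrightarrow> hole_out T \<mu> = hole_out T0 \<mu>"
  by (simp add: hole_out_def trace_le_writes_outcome)

definition out_frame :: "trace \<Rightarrow> store \<Rightarrow> store \<times> res \<Rightarrow> bool" where
  "out_frame T \<mu> p \<longleftrightarrow> (\<forall>l. l \<notin> writes T \<longrightarrow> fst p l = \<mu> l) \<and> (\<exists>v. snd p = Res (trace_outcome T) v)"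

lemma fwd_comp_out_frame: "fwd_comp \<rho> \<mu> M T \<mu>' R \<Longrightarrow> out_frame T \<mu> (\<mu>', R)"
  by (induct rule: fwd_comp.induct) (auto simp: out_frame_def erase_def)

lemma eval_out_frame: "eval T \<rho> \<mu> M \<mu>' R \<Longrightarrow> out_frame T \<mu> (\<mu>', R)"
  by (induct rule: eval.induct) (auto simp: out_frame_def)

lemma hole_out_below_eval:
  assumes "eval T0 \<rho>0 \<mu>0 M0 \<mu>2 R2" "store_le \<mu> \<mu>0" "trace_le T T0"
  shows "out_le (hole_out T \<mu>) (\<mu>2, R2)"
  using eval_out_frame[OF assms(1)] assms(2) unfolding hole_out_trace_le[OF assms(3)]
  by (auto simp: hole_out_def out_frame_def store_le_def erase_def intro: val_le.intros)

lemma env_le_upd: "env_le \<rho> \<rho>0 \<Longrightarrow> val_le v v0 \<Longrightarrow> env_le (\<rho>(x := v)) (\<rho>0(x := v0))"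
  by (simp add: env_le_def)

lemma res_le_Res_iff: "res_le R (Res k v) \<longleftrightarrow> (\<exists>v'. R = Res k v' \<and> val_le v' v)"
  by (cases R) auto


lemma fwd_comp_hole_head_below_eval:
  assumes "eval T0 \<rho>0 \<mu>0 M0 \<mu>2 R2" "store_le \<mu> \<mu>0" "trace_le T T0" "hole_head M T"
  shows "\<exists>\<mu>' R'. fwd_out T \<rho> \<mu> M = (\<mu>', R') \<and> fwd_comp \<rho> \<mu> M T \<mu>' R' \<and> out_le (\<mu>', R') (\<mu>2, R2)"
  using fwd_comp_hole_head[OF assms(4)] hole_out_below_eval[OF assms(1-3)]
  by (auto simp: fwd_out_hole_head[OF assms(4)] hole_out_def)

lemma fwd_comp_below_eval:
  assumes "eval T0 \<rho>0 \<mu>0 M0 \<mu>2 R2"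
    and "env_le \<rho> \<rho>0" "store_le \<mu> \<mu>0" "comp_le M M0" "trace_le T T0"
  shows "\<exists>\<mu>' R'. fwd_out T \<rho> \<mu> M = (\<mu>', R') \<and> fwd_comp \<rho> \<mu> M T \<mu>' R' \<and> out_le (\<mu>', R') (\<mu>2, R2)"
  using assms
proof (induction arbitrary: \<rho> \<mu> M T rule: eval.induct)
  case (eReturn \<rho>0 e v \<mu>0)
  show ?case
  proof (cases "hole_head M T")
    case False
    then obtain e' e'' where "M = Return e'" "T = TReturn e''" "exp_le e' e"
      using eReturn.prems by (auto simp: hole_head_def elim!: comp_le_upperE trace_le_upperE)
    with fwd_exp_below_eval[OF eReturn.hyps \<open>exp_le e' e\<close> eReturn.prems(1)] eReturn.prems
    show ?thesis by (auto intro: fwd_comp.intros)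
  qed (rule fwd_comp_hole_head_below_eval[OF eval.eReturn[OF eReturn.hyps] eReturn.prems(2,4)])
next
  case (eRaise \<rho>0 e v \<mu>0)
  show ?case
  proof (cases "hole_head M T")
    case False
    then obtain e' e'' where "M = Raise e'" "T = TRaise e''" "exp_le e' e"
      using eRaise.prems by (auto simp: hole_head_def elim!: comp_le_upperE trace_le_upperE)
    with fwd_exp_below_eval[OF eRaise.hyps \<open>exp_le e' e\<close> eRaise.prems(1)] eRaise.prems
    show ?thesis by (auto intro: fwd_comp.intros)
  qed (rule fwd_comp_hole_head_below_eval[OF eval.eRaise[OF eRaise.hyps] eRaise.prems(2,4)])
next
  case (eRef \<rho>0 e v l \<mu>0)
  show ?case
  proof (cases "hole_head M T")
    case False
    then obtain e' e'' where "M = Ref e'" "T = TRef l e''" "exp_le e' e"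
      using eRef.prems by (auto simp: hole_head_def elim!: comp_le_upperE trace_le_upperE)
    with fwd_exp_below_eval[OF eRef.hyps(1) \<open>exp_le e' e\<close> eRef.prems(1)] eRef.prems
    show ?thesis by (auto simp: store_le_def intro: fwd_comp.intros val_le.intros)
  qed (rule fwd_comp_hole_head_below_eval[OF eval.eRef[OF eRef.hyps] eRef.prems(2,4)])
next
  case (eDeref \<rho>0 e l \<mu>0)
  show ?case
  proof (cases "hole_head M T")
    case False
    then obtain e' e'' where "M = Deref e'" "T = TDeref l e''" "exp_le e' e"
      using eDeref.prems by (auto simp: hole_head_def elim!: comp_le_upperE trace_le_upperE)
    with fwd_exp_below_eval[OF eDeref.hyps(1) \<open>exp_le e' e\<close> eDeref.prems(1)] eDeref.prems
    show ?thesis by (auto simp: store_le_def elim!: val_le_upperE intro: fwd_comp.intros val_le.intros)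
  qed (rule fwd_comp_hole_head_below_eval[OF eval.eDeref[OF eDeref.hyps] eDeref.prems(2,4)])
next
  case (eAssign \<rho>0 e1 l e2 v \<mu>0)
  show ?case
  proof (cases "hole_head M T")
    case False
    then obtain e1' e2' e1'' e2'' where "M = Assign e1' e2'" "T = TAssign e1'' l e2''"
      "exp_le e1' e1" "exp_le e2' e2"
      using eAssign.prems by (auto simp: hole_head_def elim!: comp_le_upperE trace_le_upperE)
    with fwd_exp_below_eval[OF eAssign.hyps(1) \<open>exp_le e1' e1\<close> eAssign.prems(1)]
      fwd_exp_below_eval[OF eAssign.hyps(2) \<open>exp_le e2' e2\<close> eAssign.prems(1)] eAssign.prems
    show ?thesis
      by (auto simp: store_le_def elim!: val_le_upperE intro: fwd_comp.intros val_le.intros)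
  qed (rule fwd_comp_hole_head_below_eval[OF eval.eAssign[OF eAssign.hyps] eAssign.prems(2,4)])
next
  case (eLetS T1 \<rho>0 \<mu>0 M1 \<mu>1 v T2 x M2 \<mu>2 R)
  show ?case
  proof (cases "hole_head M T")
    case False
    then obtain M1' M2' T1' T2' where eq: "M = Let x M1' M2'" "T = TLetS T1' x T2'"
      and le: "comp_le M1' M1" "comp_le M2' M2" "trace_le T1' T1" "trace_le T2' T2"
      using eLetS.prems by (auto simp: hole_head_def elim!: comp_le_upperE trace_le_upperE)
    obtain \<mu>1' v' where first: "fwd_out T1' \<rho> \<mu> M1' = (\<mu>1', Res OVal v')"
      "fwd_comp \<rho> \<mu> M1' T1' \<mu>1' (Res OVal v')" "store_le \<mu>1' \<mu>1" "val_le v' v"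
      using eLetS.IH(1)[OF eLetS.prems(1,2) le(1,3)] by (auto simp: res_le_Res_iff)
    from eLetS.IH(2)[OF env_le_upd[OF eLetS.prems(1) first(4)] first(3) le(2,4)]
    obtain \<mu>' R' where second: "fwd_out T2' (\<rho>(x := v')) \<mu>1' M2' = (\<mu>', R')"
      "fwd_comp (\<rho>(x := v')) \<mu>1' M2' T2' \<mu>' R'" "out_le (\<mu>', R') (\<mu>2, R)"
      by blast
    show ?thesis using eq first second F_Let[OF first(2) second(2)] by simp
  qed (rule fwd_comp_hole_head_below_eval[OF eval.eLetS[OF eLetS.hyps] eLetS.prems(2,4)])
next
  case (eTryF T1 \<rho>0 \<mu>0 M1 \<mu>1 v T2 x M2 \<mu>2 R)
  show ?case
  proof (cases "hole_head M T")
    case False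
    then obtain M1' M2' T1' T2' where eq: "M = Try M1' x M2'" "T = TTryF T1' x T2'"
      and le: "comp_le M1' M1" "comp_le M2' M2" "trace_le T1' T1" "trace_le T2' T2"
      using eTryF.prems by (auto simp: hole_head_def elim!: comp_le_upperE trace_le_upperE)
    obtain \<mu>1' v' where first: "fwd_out T1' \<rho> \<mu> M1' = (\<mu>1', Res OExn v')"
      "fwd_comp \<rho> \<mu> M1' T1' \<mu>1' (Res OExn v')" "store_le \<mu>1' \<mu>1" "val_le v' v"
      using eTryF.IH(1)[OF eTryF.prems(1,2) le(1,3)] by (auto simp: res_le_Res_iff)
    from eTryF.IH(2)[OF env_le_upd[OF eTryF.prems(1) first(4)] first(3) le(2,4)]
    obtain \<mu>' R' where second: "fwd_out T2' (\<rho>(x := v')) \<mu>1' M2' = (\<mu>', R')"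
      "fwd_comp (\<rho>(x := v')) \<mu>1' M2' T2' \<mu>' R'" "out_le (\<mu>', R') (\<mu>2, R)"
      by blast
    show ?thesis using eq first second F_TryFail[OF first(2) second(2)] by simp
  qed (rule fwd_comp_hole_head_below_eval[OF eval.eTryF[OF eTryF.hyps] eTryF.prems(2,4)])
next
  case (eLetF T1 \<rho>0 \<mu>0 M1 \<mu>1 v x M2)
  show ?case
  proof (cases "hole_head M T")
    case False
    then obtain M1' M2' T1' where eq: "M = Let x M1' M2'" "T = TLetF T1'"
      and le: "comp_le M1' M1" "trace_le T1' T1"
      using eLetF.prems by (auto simp: hole_head_def elim!: comp_le_upperE trace_le_upperE)
    with eLetF.IH[OF eLetF.prems(1,2) le] show ?thesis
      by (auto simp: res_le_Res_iff intro: fwd_comp.intros)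
  qed (rule fwd_comp_hole_head_below_eval[OF eval.eLetF[OF eLetF.hyps] eLetF.prems(2,4)])
next
  case (eTryS T1 \<rho>0 \<mu>0 M1 \<mu>1 v x M2)
  show ?case
  proof (cases "hole_head M T")
    case False
    then obtain M1' M2' T1' where eq: "M = Try M1' x M2'" "T = TTryS T1'"
      and le: "comp_le M1' M1" "trace_le T1' T1"
      using eTryS.prems by (auto simp: hole_head_def elim!: comp_le_upperE trace_le_upperE)
    with eTryS.IH[OF eTryS.prems(1,2) le] show ?thesis
      by (auto simp: res_le_Res_iff intro: fwd_comp.intros)
  qed (rule fwd_comp_hole_head_below_eval[OF eval.eTryS[OF eTryS.hyps] eTryS.prems(2,4)])
next
  case (eCaseL \<rho>0 e v T1 x \<mu>0 M1 \<mu>1 R y M2)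
  show ?case
  proof (cases "hole_head M T")
    case False
    then obtain e' e'' M1' M2' T1' where eq: "M = Case e' x M1' y M2'" "T = TCaseL e'' x T1' y"
      and le: "exp_le e' e" "comp_le M1' M1" "trace_le T1' T1"
      using eCaseL.prems by (auto simp: hole_head_def elim!: comp_le_upperE trace_le_upperE)
    have scrut: "fwd_exp \<rho> e' (fwd_val \<rho> e')" "val_le (fwd_val \<rho> e') (VInl v)"
      using fwd_exp_below_eval[OF eCaseL.hyps(1) le(1) eCaseL.prems(1)] by auto
    from scrut(2) consider "fwd_val \<rho> e' = VHole" | v' where "fwd_val \<rho> e' = VInl v'" "val_le v' v"
      by (auto elim: val_le_upperE)
    then show ?thesis
    proof cases
      case 1
      with hole_out_below_eval[OF eval.eCaseL[OF eCaseL.hyps] eCaseL.prems(2,4)] scrut eq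
      show ?thesis using 1 by (auto simp: hole_out_def intro: fwd_comp.intros)
    next
      case (2 v')
      from eCaseL.IH[OF env_le_upd[OF eCaseL.prems(1) \<open>val_le v' v\<close>] eCaseL.prems(2) le(2,3)]
      obtain \<mu>' R' where branch: "fwd_out T1' (\<rho>(x := v')) \<mu> M1' = (\<mu>', R')"
        "fwd_comp (\<rho>(x := v')) \<mu> M1' T1' \<mu>' R'" "out_le (\<mu>', R') (\<mu>1, R)"
        by blast
      show ?thesis using 2 eq branch F_CaseL[OF scrut(1)[unfolded 2(1)] branch(2)] by simp
    qed
  qed (rule fwd_comp_hole_head_below_eval[OF eval.eCaseL[OF eCaseL.hyps] eCaseL.prems(2,4)])
next
  case (eCaseR \<rho>0 e v T1 y \<mu>0 M2 \<mu>1 R x M1)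
  show ?case
  proof (cases "hole_head M T")
    case False
    then obtain e' e'' M1' M2' T1' where eq: "M = Case e' x M1' y M2'" "T = TCaseR e'' x y T1'"
      and le: "exp_le e' e" "comp_le M2' M2" "trace_le T1' T1"
      using eCaseR.prems by (auto simp: hole_head_def elim!: comp_le_upperE trace_le_upperE)
    have scrut: "fwd_exp \<rho> e' (fwd_val \<rho> e')" "val_le (fwd_val \<rho> e') (VInr v)"
      using fwd_exp_below_eval[OF eCaseR.hyps(1) le(1) eCaseR.prems(1)] by auto
    from scrut(2) consider "fwd_val \<rho> e' = VHole" | v' where "fwd_val \<rho> e' = VInr v'" "val_le v' v"
      by (auto elim: val_le_upperE)
    then show ?thesis
    proof cases
      case 1
      with hole_out_below_eval[OF eval.eCaseR[OF eCaseR.hyps] eCaseR.prems(2,4)] scrut eq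
      show ?thesis using 1 by (auto simp: hole_out_def intro: fwd_comp.intros)
    next
      case (2 v')
      from eCaseR.IH[OF env_le_upd[OF eCaseR.prems(1) \<open>val_le v' v\<close>] eCaseR.prems(2) le(2,3)]
      obtain \<mu>' R' where branch: "fwd_out T1' (\<rho>(y := v')) \<mu> M2' = (\<mu>', R')"
        "fwd_comp (\<rho>(y := v')) \<mu> M2' T1' \<mu>' R'" "out_le (\<mu>', R') (\<mu>1, R)"
        by blast
      show ?thesis using 2 eq branch F_CaseR[OF scrut(1)[unfolded 2(1)] branch(2)] by simp
    qed
  qed (rule fwd_comp_hole_head_below_eval[OF eval.eCaseR[OF eCaseR.hyps] eCaseR.prems(2,4)])
next
  case (eApp \<rho>0 e1 v1 \<rho>c f x Mc e2 v2 T1 \<mu>0 \<mu>1 R)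
  show ?case
  proof (cases "hole_head M T")
    case False
    then obtain e1' e2' e1'' e2'' T1' where eq: "M = App e1' e2'" "T = TApp e1'' e2'' f x T1'"
      and le: "exp_le e1' e1" "exp_le e2' e2" "trace_le T1' T1"
      using eApp.prems by (auto simp: hole_head_def elim!: comp_le_upperE trace_le_upperE)
    have callee: "fwd_exp \<rho> e1' (fwd_val \<rho> e1')" "val_le (fwd_val \<rho> e1') (VClo \<rho>c f x Mc)"
      using fwd_exp_below_eval[OF eApp.hyps(1) le(1) eApp.prems(1)] eApp.hyps(2) by auto
    have arg: "fwd_exp \<rho> e2' (fwd_val \<rho> e2')" "val_le (fwd_val \<rho> e2') v2"
      using fwd_exp_below_eval[OF eApp.hyps(3) le(2) eApp.prems(1)] by auto
    from callee(2) consider "fwd_val \<rho> e1' = VHole"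
      | \<rho>' M' where "fwd_val \<rho> e1' = VClo \<rho>' f x M'" "env_le \<rho>' \<rho>c" "comp_le M' Mc"
      by (auto simp: env_le_def elim: val_le_upperE)
    then show ?thesis
    proof cases
      case 1
      with hole_out_below_eval[OF eval.eApp[OF eApp.hyps] eApp.prems(2,4)] callee eq
      show ?thesis using 1 by (auto simp: hole_out_def intro: fwd_comp.intros)
    next
      case (2 \<rho>' M')
      then have "env_le ((\<rho>'(f := fwd_val \<rho> e1'))(x := fwd_val \<rho> e2')) ((\<rho>c(f := v1))(x := v2))"
        using callee(2) arg(2) eApp.hyps(2) by (auto simp: env_le_def)
      from eApp.IH[OF this eApp.prems(2) \<open>comp_le M' Mc\<close> le(3)]
      obtain \<mu>' R' where
        body: "fwd_out T1' ((\<rho>'(f := fwd_val \<rho> e1'))(x := fwd_val \<rho> e2')) \<mu> M' = (\<mu>', R')"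
        "fwd_comp ((\<rho>'(f := fwd_val \<rho> e1'))(x := fwd_val \<rho> e2')) \<mu> M' T1' \<mu>' R'"
        "out_le (\<mu>', R') (\<mu>1, R)"
        by blast
      show ?thesis using 2 eq body F_App[OF callee(1) 2(1) arg(1) body(2)] by simp
    qed
  qed (rule fwd_comp_hole_head_below_eval[OF eval.eApp[OF eApp.hyps] eApp.prems(2,4)])
qed


section \<open>Forward slicing preserves meets\<close>

lemma fwd_out_frame_below_eval:
  assumes "eval T0 \<rho>0 \<mu>0 M0 \<mu>2 R2"
    and "env_le \<rho> \<rho>0" "store_le \<mu> \<mu>0" "comp_le M M0" "trace_le T T0"
  shows "out_frame T0 \<mu> (fwd_out T \<rho> \<mu> M)"
proof -
  obtain \<mu>' R' where "fwd_out T \<rho> \<mu> M = (\<mu>', R')" "fwd_comp \<rho> \<mu> M T \<mu>' R'"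
    using fwd_comp_below_eval[OF assms] by blast
  with fwd_comp_out_frame[OF this(2)] show ?thesis
    by (simp add: out_frame_def trace_le_writes_outcome[OF assms(5)])
qed

lemma out_meet_hole_out:
  "out_frame T \<mu>' p \<Longrightarrow> out_meet (hole_out T \<mu>) p = hole_out T (pointwise_meet \<mu> \<mu>')"
  "out_frame T \<mu> p \<Longrightarrow> out_meet p (hole_out T \<mu>') = hole_out T (pointwise_meet \<mu> \<mu>')"
  by (cases p; auto simp: out_frame_def hole_out_def erase_def pointwise_meet_def)+

lemma fwd_out_meet_hole_out:
  assumes "eval T0 \<rho>0 \<mu>0 M0 \<mu>2 R2"
    and "env_le \<rho> \<rho>0" "store_le \<mu> \<mu>0" "comp_le M M0" "trace_le T T0"
    and "env_le \<rho>' \<rho>0" "store_le \<mu>' \<mu>0" "comp_le M' M0" "trace_le T' T0"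
    and "fwd_out T \<rho> \<mu> M = hole_out T \<mu> \<or> fwd_out T' \<rho>' \<mu>' M' = hole_out T' \<mu>'"
    and "fwd_out (trace_meet T T') (pointwise_meet \<rho> \<rho>') (pointwise_meet \<mu> \<mu>') (comp_meet M M')
           = hole_out (trace_meet T T') (pointwise_meet \<mu> \<mu>')"
  shows "fwd_out (trace_meet T T') (pointwise_meet \<rho> \<rho>') (pointwise_meet \<mu> \<mu>') (comp_meet M M')
           = out_meet (fwd_out T \<rho> \<mu> M) (fwd_out T' \<rho>' \<mu>' M')"
proof -
  have meet: "hole_out (trace_meet T T') (pointwise_meet \<mu> \<mu>') = hole_out T0 (pointwise_meet \<mu> \<mu>')"
    by (rule hole_out_trace_le[OF trace_le_trans[OF trace_meet_le1 assms(5)]])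
  note frames = fwd_out_frame_below_eval[OF assms(1-5)] fwd_out_frame_below_eval[OF assms(1,6-9)]
  from assms(10) show ?thesis
  proof
    assume "fwd_out T \<rho> \<mu> M = hole_out T \<mu>"
    then show ?thesis using assms(11) meet out_meet_hole_out(1)[OF frames(2)]
      by (simp add: hole_out_trace_le[OF assms(5)])
  next
    assume "fwd_out T' \<rho>' \<mu>' M' = hole_out T' \<mu>'"
    then show ?thesis using assms(11) meet out_meet_hole_out(2)[OF frames(1)]
      by (simp add: hole_out_trace_le[OF assms(9)])
  qed
qed

lemma fwd_out_meet_hole_head:
  assumes "eval T0 \<rho>0 \<mu>0 M0 \<mu>2 R2"
    and "env_le \<rho> \<rho>0" "store_le \<mu> \<mu>0" "comp_le M M0" "trace_le T T0"
    and "env_le \<rho>' \<rho>0" "store_le \<mu>' \<mu>0" "comp_le M' M0" "trace_le T' T0"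
    and "hole_head M T \<or> hole_head M' T'"
  shows "fwd_out (trace_meet T T') (pointwise_meet \<rho> \<rho>') (pointwise_meet \<mu> \<mu>') (comp_meet M M')
           = out_meet (fwd_out T \<rho> \<mu> M) (fwd_out T' \<rho>' \<mu>' M')"
  using assms(10) by (intro fwd_out_meet_hole_out[OF assms(1-9)])
    (auto simp: fwd_out_hole_head hole_head_meet)

lemma pointwise_meet_upd:
  "pointwise_meet (\<rho>(x := a)) (\<rho>'(x := b)) = (pointwise_meet \<rho> \<rho>')(x := val_meet a b)"
  by (auto simp: pointwise_meet_def)

lemma val_meet_VClo:
  "val_meet (VClo \<rho> f x M) (VClo \<rho>' f x M') = VClo (pointwise_meet \<rho> \<rho>') f x (comp_meet M M')"
  by (simp add: pointwise_meet_def)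


lemma fwd_out_meet:
  assumes "eval T0 \<rho>0 \<mu>0 M0 \<mu>2 R2"
    and "env_le \<rho> \<rho>0" "store_le \<mu> \<mu>0" "comp_le M M0" "trace_le T T0"
    and "env_le \<rho>' \<rho>0" "store_le \<mu>' \<mu>0" "comp_le M' M0" "trace_le T' T0"
  shows "fwd_out (trace_meet T T') (pointwise_meet \<rho> \<rho>') (pointwise_meet \<mu> \<mu>') (comp_meet M M')
           = out_meet (fwd_out T \<rho> \<mu> M) (fwd_out T' \<rho>' \<mu>' M')"
  using assms
proof (induction arbitrary: \<rho> \<mu> M T \<rho>' \<mu>' M' T' rule: eval.induct)
  case (eReturn \<rho>0 e v \<mu>0)
  show ?case
  proof (cases "hole_head M T \<or> hole_head M' T'")
    case False
    then obtain a a' b b' where "M = Return a" "T = TReturn a'" "M' = Return b" "T' = TReturn b'"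
      "exp_le a e" "exp_le b e"
      using eReturn.prems by (auto simp: hole_head_def elim!: comp_le_upperE trace_le_upperE)
    with fwd_val_meet[OF eReturn.hyps \<open>exp_le a e\<close> \<open>exp_le b e\<close> eReturn.prems(1,5)]
    show ?thesis by simp
  qed (rule fwd_out_meet_hole_head[OF eval.eReturn[OF eReturn.hyps] eReturn.prems])
next
  case (eRaise \<rho>0 e v \<mu>0)
  show ?case
  proof (cases "hole_head M T \<or> hole_head M' T'")
    case False
    then obtain a a' b b' where "M = Raise a" "T = TRaise a'" "M' = Raise b" "T' = TRaise b'"
      "exp_le a e" "exp_le b e"
      using eRaise.prems by (auto simp: hole_head_def elim!: comp_le_upperE trace_le_upperE)
    with fwd_val_meet[OF eRaise.hyps \<open>exp_le a e\<close> \<open>exp_le b e\<close> eRaise.prems(1,5)]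
    show ?thesis by simp
  qed (rule fwd_out_meet_hole_head[OF eval.eRaise[OF eRaise.hyps] eRaise.prems])
next
  case (eRef \<rho>0 e v l \<mu>0)
  show ?case
  proof (cases "hole_head M T \<or> hole_head M' T'")
    case False
    then obtain a a' b b' where "M = Ref a" "T = TRef l a'" "M' = Ref b" "T' = TRef l b'"
      "exp_le a e" "exp_le b e"
      using eRef.prems by (auto simp: hole_head_def elim!: comp_le_upperE trace_le_upperE)
    with fwd_val_meet[OF eRef.hyps(1) \<open>exp_le a e\<close> \<open>exp_le b e\<close> eRef.prems(1,5)]
    show ?thesis by (simp add: pointwise_meet_upd)
  qed (rule fwd_out_meet_hole_head[OF eval.eRef[OF eRef.hyps] eRef.prems])
next
  case (eDeref \<rho>0 e l \<mu>0)
  show ?case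
  proof (cases "hole_head M T \<or> hole_head M' T'")
    case False
    then obtain a a' b b' where "M = Deref a" "T = TDeref l a'" "M' = Deref b" "T' = TDeref l b'"
      "exp_le a e" "exp_le b e"
      using eDeref.prems by (auto simp: hole_head_def elim!: comp_le_upperE trace_le_upperE)
    with fwd_val_meet[OF eDeref.hyps(1) \<open>exp_le a e\<close> \<open>exp_le b e\<close> eDeref.prems(1,5)]
      fwd_exp_below_eval[OF eDeref.hyps(1) \<open>exp_le a e\<close> eDeref.prems(1)]
      fwd_exp_below_eval[OF eDeref.hyps(1) \<open>exp_le b e\<close> eDeref.prems(5)]
    show ?thesis by (auto simp: pointwise_meet_def elim!: val_le_upperE)
  qed (rule fwd_out_meet_hole_head[OF eval.eDeref[OF eDeref.hyps] eDeref.prems])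
next
  case (eAssign \<rho>0 e1 l e2 v \<mu>0)
  show ?case
  proof (cases "hole_head M T \<or> hole_head M' T'")
    case False
    then obtain a1 a2 a1' a2' b1 b2 b1' b2' where
      "M = Assign a1 a2" "T = TAssign a1' l a2'" "M' = Assign b1 b2" "T' = TAssign b1' l b2'"
      "exp_le a1 e1" "exp_le a2 e2" "exp_le b1 e1" "exp_le b2 e2"
      using eAssign.prems by (auto simp: hole_head_def elim!: comp_le_upperE trace_le_upperE)
    with fwd_val_meet[OF eAssign.hyps(1) \<open>exp_le a1 e1\<close> \<open>exp_le b1 e1\<close> eAssign.prems(1,5)]
      fwd_val_meet[OF eAssign.hyps(2) \<open>exp_le a2 e2\<close> \<open>exp_le b2 e2\<close> eAssign.prems(1,5)]
      fwd_exp_below_eval[OF eAssign.hyps(1) \<open>exp_le a1 e1\<close> eAssign.prems(1)]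
      fwd_exp_below_eval[OF eAssign.hyps(1) \<open>exp_le b1 e1\<close> eAssign.prems(5)]
    show ?thesis by (auto simp: pointwise_meet_upd elim!: val_le_upperE)
  qed (rule fwd_out_meet_hole_head[OF eval.eAssign[OF eAssign.hyps] eAssign.prems])
next
  case (eLetS T1 \<rho>0 \<mu>0 M1 \<mu>1 v T2 x M2 \<mu>2 R)
  show ?case
  proof (cases "hole_head M T \<or> hole_head M' T'")
    case False
    then obtain M1a M2a T1a T2a M1b M2b T1b T2b where
      eq: "M = Let x M1a M2a" "T = TLetS T1a x T2a" "M' = Let x M1b M2b" "T' = TLetS T1b x T2b"
      and a: "comp_le M1a M1" "comp_le M2a M2" "trace_le T1a T1" "trace_le T2a T2"
      and b: "comp_le M1b M1" "comp_le M2b M2" "trace_le T1b T1" "trace_le T2b T2"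
      using eLetS.prems by (auto simp: hole_head_def elim!: comp_le_upperE trace_le_upperE)
    obtain \<mu>a va where fa: "fwd_out T1a \<rho> \<mu> M1a = (\<mu>a, Res OVal va)" "store_le \<mu>a \<mu>1" "val_le va v"
      using fwd_comp_below_eval[OF eLetS.hyps(1) eLetS.prems(1,2) a(1,3)]
      by (auto simp: res_le_Res_iff)
    obtain \<mu>b vb where fb: "fwd_out T1b \<rho>' \<mu>' M1b = (\<mu>b, Res OVal vb)" "store_le \<mu>b \<mu>1" "val_le vb v"
      using fwd_comp_below_eval[OF eLetS.hyps(1) eLetS.prems(5,6) b(1,3)]
      by (auto simp: res_le_Res_iff)
    have "fwd_out (trace_meet T1a T1b) (pointwise_meet \<rho> \<rho>') (pointwise_meet \<mu> \<mu>') (comp_meet M1a M1b)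
        = (pointwise_meet \<mu>a \<mu>b, Res OVal (val_meet va vb))"
      using eLetS.IH(1)[OF eLetS.prems(1,2) a(1,3) eLetS.prems(5,6) b(1,3)] fa fb by simp
    then have "fwd_out (trace_meet T T') (pointwise_meet \<rho> \<rho>') (pointwise_meet \<mu> \<mu>') (comp_meet M M')
        = fwd_out (trace_meet T2a T2b) (pointwise_meet (\<rho>(x := va)) (\<rho>'(x := vb)))
            (pointwise_meet \<mu>a \<mu>b) (comp_meet M2a M2b)"
      using eq by (simp add: pointwise_meet_upd)
    also have "\<dots> = out_meet (fwd_out T2a (\<rho>(x := va)) \<mu>a M2a) (fwd_out T2b (\<rho>'(x := vb)) \<mu>b M2b)"
      by (rule eLetS.IH(2)[OF env_le_upd[OF eLetS.prems(1) fa(3)] fa(2) a(2,4)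
            env_le_upd[OF eLetS.prems(5) fb(3)] fb(2) b(2,4)])
    also have "\<dots> = out_meet (fwd_out T \<rho> \<mu> M) (fwd_out T' \<rho>' \<mu>' M')"
      using eq fa fb by simp
    finally show ?thesis .
  qed (rule fwd_out_meet_hole_head[OF eval.eLetS[OF eLetS.hyps] eLetS.prems])
next
  case (eTryF T1 \<rho>0 \<mu>0 M1 \<mu>1 v T2 x M2 \<mu>2 R)
  show ?case
  proof (cases "hole_head M T \<or> hole_head M' T'")
    case False
    then obtain M1a M2a T1a T2a M1b M2b T1b T2b where
      eq: "M = Try M1a x M2a" "T = TTryF T1a x T2a" "M' = Try M1b x M2b" "T' = TTryF T1b x T2b"
      and a: "comp_le M1a M1" "comp_le M2a M2" "trace_le T1a T1" "trace_le T2a T2"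
      and b: "comp_le M1b M1" "comp_le M2b M2" "trace_le T1b T1" "trace_le T2b T2"
      using eTryF.prems by (auto simp: hole_head_def elim!: comp_le_upperE trace_le_upperE)
    obtain \<mu>a va where fa: "fwd_out T1a \<rho> \<mu> M1a = (\<mu>a, Res OExn va)" "store_le \<mu>a \<mu>1" "val_le va v"
      using fwd_comp_below_eval[OF eTryF.hyps(1) eTryF.prems(1,2) a(1,3)]
      by (auto simp: res_le_Res_iff)
    obtain \<mu>b vb where fb: "fwd_out T1b \<rho>' \<mu>' M1b = (\<mu>b, Res OExn vb)" "store_le \<mu>b \<mu>1" "val_le vb v"
      using fwd_comp_below_eval[OF eTryF.hyps(1) eTryF.prems(5,6) b(1,3)]
      by (auto simp: res_le_Res_iff)
    have "fwd_out (trace_meet T1a T1b) (pointwise_meet \<rho> \<rho>') (pointwise_meet \<mu> \<mu>') (comp_meet M1a M1b)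
        = (pointwise_meet \<mu>a \<mu>b, Res OExn (val_meet va vb))"
      using eTryF.IH(1)[OF eTryF.prems(1,2) a(1,3) eTryF.prems(5,6) b(1,3)] fa fb by simp
    then have "fwd_out (trace_meet T T') (pointwise_meet \<rho> \<rho>') (pointwise_meet \<mu> \<mu>') (comp_meet M M')
        = fwd_out (trace_meet T2a T2b) (pointwise_meet (\<rho>(x := va)) (\<rho>'(x := vb)))
            (pointwise_meet \<mu>a \<mu>b) (comp_meet M2a M2b)"
      using eq by (simp add: pointwise_meet_upd)
    also have "\<dots> = out_meet (fwd_out T2a (\<rho>(x := va)) \<mu>a M2a) (fwd_out T2b (\<rho>'(x := vb)) \<mu>b M2b)"
      by (rule eTryF.IH(2)[OF env_le_upd[OF eTryF.prems(1) fa(3)] fa(2) a(2,4)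
            env_le_upd[OF eTryF.prems(5) fb(3)] fb(2) b(2,4)])
    also have "\<dots> = out_meet (fwd_out T \<rho> \<mu> M) (fwd_out T' \<rho>' \<mu>' M')"
      using eq fa fb by simp
    finally show ?thesis .
  qed (rule fwd_out_meet_hole_head[OF eval.eTryF[OF eTryF.hyps] eTryF.prems])
next
  case (eLetF T1 \<rho>0 \<mu>0 M1 \<mu>1 v x M2)
  show ?case
  proof (cases "hole_head M T \<or> hole_head M' T'")
    case False
    then obtain M1a M2a T1a M1b M2b T1b where
      "M = Let x M1a M2a" "T = TLetF T1a" "M' = Let x M1b M2b" "T' = TLetF T1b"
      and "comp_le M1a M1" "trace_le T1a T1" "comp_le M1b M1" "trace_le T1b T1"
      using eLetF.prems by (auto simp: hole_head_def elim!: comp_le_upperE trace_le_upperE)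
    with eLetF.IH[of \<rho> \<mu> M1a T1a \<rho>' \<mu>' M1b T1b] eLetF.prems show ?thesis by simp
  qed (rule fwd_out_meet_hole_head[OF eval.eLetF[OF eLetF.hyps] eLetF.prems])
next
  case (eTryS T1 \<rho>0 \<mu>0 M1 \<mu>1 v x M2)
  show ?case
  proof (cases "hole_head M T \<or> hole_head M' T'")
    case False
    then obtain M1a M2a T1a M1b M2b T1b where
      "M = Try M1a x M2a" "T = TTryS T1a" "M' = Try M1b x M2b" "T' = TTryS T1b"
      and "comp_le M1a M1" "trace_le T1a T1" "comp_le M1b M1" "trace_le T1b T1"
      using eTryS.prems by (auto simp: hole_head_def elim!: comp_le_upperE trace_le_upperE)
    with eTryS.IH[of \<rho> \<mu> M1a T1a \<rho>' \<mu>' M1b T1b] eTryS.prems show ?thesis by simp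
  qed (rule fwd_out_meet_hole_head[OF eval.eTryS[OF eTryS.hyps] eTryS.prems])
next
  case (eCaseL \<rho>0 e v T1 x \<mu>0 M1 \<mu>1 R y M2)
  show ?case
  proof (cases "hole_head M T \<or> hole_head M' T'")
    case False
    then obtain a b a' b' M1a M2a T1a M1b M2b T1b where
      eq: "M = Case a x M1a y M2a" "T = TCaseL a' x T1a y" "M' = Case b x M1b y M2b" "T' = TCaseL b' x T1b y"
      and le: "exp_le a e" "exp_le b e" "comp_le M1a M1" "trace_le T1a T1" "comp_le M1b M1" "trace_le T1b T1"
      using eCaseL.prems by (auto simp: hole_head_def elim!: comp_le_upperE trace_le_upperE)
    have scrut: "val_le (fwd_val \<rho> a) (VInl v)" "val_le (fwd_val \<rho>' b) (VInl v)"
      using fwd_exp_below_eval[OF eCaseL.hyps(1) le(1) eCaseL.prems(1)]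
        fwd_exp_below_eval[OF eCaseL.hyps(1) le(2) eCaseL.prems(5)] by auto
    have meet: "fwd_val (pointwise_meet \<rho> \<rho>') (exp_meet a b) = val_meet (fwd_val \<rho> a) (fwd_val \<rho>' b)"
      using fwd_val_meet[OF eCaseL.hyps(1) le(1,2) eCaseL.prems(1,5)] .
    show ?thesis
    proof (cases "fwd_val \<rho> a = VHole \<or> fwd_val \<rho>' b = VHole")
      case True
      with eq meet show ?thesis
        by (intro fwd_out_meet_hole_out[OF eval.eCaseL[OF eCaseL.hyps] eCaseL.prems]) auto
    next
      case False
      with scrut obtain va vb where v: "fwd_val \<rho> a = VInl va" "val_le va v"
        "fwd_val \<rho>' b = VInl vb" "val_le vb v"
        by (auto elim!: val_le_upperE)
      have "fwd_out (trace_meet T T') (pointwise_meet \<rho> \<rho>') (pointwise_meet \<mu> \<mu>') (comp_meet M M')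
          = fwd_out (trace_meet T1a T1b) (pointwise_meet (\<rho>(x := va)) (\<rho>'(x := vb)))
              (pointwise_meet \<mu> \<mu>') (comp_meet M1a M1b)"
        using eq v meet by (simp add: pointwise_meet_upd)
      also have "\<dots> = out_meet (fwd_out T1a (\<rho>(x := va)) \<mu> M1a) (fwd_out T1b (\<rho>'(x := vb)) \<mu>' M1b)"
        by (rule eCaseL.IH[OF env_le_upd[OF eCaseL.prems(1) v(2)] eCaseL.prems(2) le(3,4)
              env_le_upd[OF eCaseL.prems(5) v(4)] eCaseL.prems(6) le(5,6)])
      also have "\<dots> = out_meet (fwd_out T \<rho> \<mu> M) (fwd_out T' \<rho>' \<mu>' M')"
        using eq v by simp
      finally show ?thesis .
    qed
  qed (rule fwd_out_meet_hole_head[OF eval.eCaseL[OF eCaseL.hyps] eCaseL.prems])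
next
  case (eCaseR \<rho>0 e v T1 y \<mu>0 M2 \<mu>1 R x M1)
  show ?case
  proof (cases "hole_head M T \<or> hole_head M' T'")
    case False
    then obtain a b a' b' M1a M2a T1a M1b M2b T1b where
      eq: "M = Case a x M1a y M2a" "T = TCaseR a' x y T1a" "M' = Case b x M1b y M2b" "T' = TCaseR b' x y T1b"
      and le: "exp_le a e" "exp_le b e" "comp_le M2a M2" "trace_le T1a T1" "comp_le M2b M2" "trace_le T1b T1"
      using eCaseR.prems by (auto simp: hole_head_def elim!: comp_le_upperE trace_le_upperE)
    have scrut: "val_le (fwd_val \<rho> a) (VInr v)" "val_le (fwd_val \<rho>' b) (VInr v)"
      using fwd_exp_below_eval[OF eCaseR.hyps(1) le(1) eCaseR.prems(1)]
        fwd_exp_below_eval[OF eCaseR.hyps(1) le(2) eCaseR.prems(5)] by auto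
    have meet: "fwd_val (pointwise_meet \<rho> \<rho>') (exp_meet a b) = val_meet (fwd_val \<rho> a) (fwd_val \<rho>' b)"
      using fwd_val_meet[OF eCaseR.hyps(1) le(1,2) eCaseR.prems(1,5)] .
    show ?thesis
    proof (cases "fwd_val \<rho> a = VHole \<or> fwd_val \<rho>' b = VHole")
      case True
      with eq meet show ?thesis
        by (intro fwd_out_meet_hole_out[OF eval.eCaseR[OF eCaseR.hyps] eCaseR.prems]) auto
    next
      case False
      with scrut obtain va vb where v: "fwd_val \<rho> a = VInr va" "val_le va v"
        "fwd_val \<rho>' b = VInr vb" "val_le vb v"
        by (auto elim!: val_le_upperE)
      have "fwd_out (trace_meet T T') (pointwise_meet \<rho> \<rho>') (pointwise_meet \<mu> \<mu>') (comp_meet M M')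
          = fwd_out (trace_meet T1a T1b) (pointwise_meet (\<rho>(y := va)) (\<rho>'(y := vb)))
              (pointwise_meet \<mu> \<mu>') (comp_meet M2a M2b)"
        using eq v meet by (simp add: pointwise_meet_upd)
      also have "\<dots> = out_meet (fwd_out T1a (\<rho>(y := va)) \<mu> M2a) (fwd_out T1b (\<rho>'(y := vb)) \<mu>' M2b)"
        by (rule eCaseR.IH[OF env_le_upd[OF eCaseR.prems(1) v(2)] eCaseR.prems(2) le(3,4)
              env_le_upd[OF eCaseR.prems(5) v(4)] eCaseR.prems(6) le(5,6)])
      also have "\<dots> = out_meet (fwd_out T \<rho> \<mu> M) (fwd_out T' \<rho>' \<mu>' M')"
        using eq v by simp
      finally show ?thesis .
    qed
  qed (rule fwd_out_meet_hole_head[OF eval.eCaseR[OF eCaseR.hyps] eCaseR.prems])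
next
  case (eApp \<rho>0 e1 v1 \<rho>c f x Mc e2 v2 T1 \<mu>0 \<mu>1 R)
  show ?case
  proof (cases "hole_head M T \<or> hole_head M' T'")
    case False
    then obtain a1 a2 a1' a2' b1 b2 b1' b2' T1a T1b where
      eq: "M = App a1 a2" "T = TApp a1' a2' f x T1a" "M' = App b1 b2" "T' = TApp b1' b2' f x T1b"
      and le: "exp_le a1 e1" "exp_le a2 e2" "trace_le T1a T1"
        "exp_le b1 e1" "exp_le b2 e2" "trace_le T1b T1"
      using eApp.prems by (auto simp: hole_head_def elim!: comp_le_upperE trace_le_upperE)
    have callee: "val_le (fwd_val \<rho> a1) (VClo \<rho>c f x Mc)" "val_le (fwd_val \<rho>' b1) (VClo \<rho>c f x Mc)"
      using fwd_exp_below_eval[OF eApp.hyps(1) le(1) eApp.prems(1)]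
        fwd_exp_below_eval[OF eApp.hyps(1) le(4) eApp.prems(5)] eApp.hyps(2) by auto
    have arg: "val_le (fwd_val \<rho> a2) v2" "val_le (fwd_val \<rho>' b2) v2"
      using fwd_exp_below_eval[OF eApp.hyps(3) le(2) eApp.prems(1)]
        fwd_exp_below_eval[OF eApp.hyps(3) le(5) eApp.prems(5)] by auto
    have meet: "fwd_val (pointwise_meet \<rho> \<rho>') (exp_meet a1 b1) = val_meet (fwd_val \<rho> a1) (fwd_val \<rho>' b1)"
      "fwd_val (pointwise_meet \<rho> \<rho>') (exp_meet a2 b2) = val_meet (fwd_val \<rho> a2) (fwd_val \<rho>' b2)"
      using fwd_val_meet[OF eApp.hyps(1) le(1,4) eApp.prems(1,5)]
        fwd_val_meet[OF eApp.hyps(3) le(2,5) eApp.prems(1,5)] by auto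
    show ?thesis
    proof (cases "fwd_val \<rho> a1 = VHole \<or> fwd_val \<rho>' b1 = VHole")
      case True
      with eq meet show ?thesis
        by (intro fwd_out_meet_hole_out[OF eval.eApp[OF eApp.hyps] eApp.prems]) auto
    next
      case False
      with callee obtain \<rho>a Ma \<rho>b Mb where c:
        "fwd_val \<rho> a1 = VClo \<rho>a f x Ma" "env_le \<rho>a \<rho>c" "comp_le Ma Mc"
        "fwd_val \<rho>' b1 = VClo \<rho>b f x Mb" "env_le \<rho>b \<rho>c" "comp_le Mb Mc"
        by (auto simp: env_le_def elim!: val_le_upperE)
      have "env_le ((\<rho>a(f := fwd_val \<rho> a1))(x := fwd_val \<rho> a2)) ((\<rho>c(f := v1))(x := v2))"
        "env_le ((\<rho>b(f := fwd_val \<rho>' b1))(x := fwd_val \<rho>' b2)) ((\<rho>c(f := v1))(x := v2))"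
        using c callee arg eApp.hyps(2) by (auto intro!: env_le_upd val_le.intros)
      note body = eApp.IH[OF this(1) eApp.prems(2) c(3) le(3) this(2) eApp.prems(6) c(6) le(6)]
      have "fwd_out (trace_meet T T') (pointwise_meet \<rho> \<rho>') (pointwise_meet \<mu> \<mu>') (comp_meet M M')
          = fwd_out (trace_meet T1a T1b)
              (pointwise_meet ((\<rho>a(f := fwd_val \<rho> a1))(x := fwd_val \<rho> a2))
                 ((\<rho>b(f := fwd_val \<rho>' b1))(x := fwd_val \<rho>' b2)))
              (pointwise_meet \<mu> \<mu>') (comp_meet Ma Mb)"
        using eq c meet by (simp add: pointwise_meet_upd val_meet_VClo del: val_meet.simps)
      also have "\<dots> = out_meet (fwd_out T1a ((\<rho>a(f := fwd_val \<rho> a1))(x := fwd_val \<rho> a2)) \<mu> Ma)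
          (fwd_out T1b ((\<rho>b(f := fwd_val \<rho>' b1))(x := fwd_val \<rho>' b2)) \<mu>' Mb)"
        by (rule body)
      also have "\<dots> = out_meet (fwd_out T \<rho> \<mu> M) (fwd_out T' \<rho>' \<mu>' M')"
        using eq c by simp
      finally show ?thesis .
    qed
  qed (rule fwd_out_meet_hole_head[OF eval.eApp[OF eApp.hyps] eApp.prems])
qed


fun fwd_cfg :: "env \<times> store \<times> comp \<times> trace \<Rightarrow> store \<times> res" where
  "fwd_cfg (\<rho>, \<mu>, M, T) = fwd_out T \<rho> \<mu> M"

lemma fwd_cfg_below_eval:
  assumes "eval T \<rho> \<mu>1 M \<mu>2 R" "cfg_le c (\<rho>, \<mu>1, M, T)"
  shows "out_le (fwd_cfg c) (\<mu>2, R)"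
  using assms fwd_comp_below_eval[OF assms(1)] by (cases c) fastforce

lemma fwd_eq_fwd_cfg:
  assumes "eval T \<rho> \<mu>1 M \<mu>2 R" "cfg_le c (\<rho>, \<mu>1, M, T)"
  shows "fwd c = fwd_cfg c"
proof -
  obtain \<rho>' \<mu>' M' T' where c: "c = (\<rho>', \<mu>', M', T')" by (cases c)
  with fwd_comp_below_eval[OF assms(1)] assms(2) obtain \<mu>'' R'' where
    "fwd_out T' \<rho>' \<mu>' M' = (\<mu>'', R'')" "fwd_comp \<rho>' \<mu>' M' T' \<mu>'' R''"
    by fastforce
  then show ?thesis
    unfolding c fwd.simps fwd_cfg.simps
    by (intro the_equality) (auto dest: fwd_comp_fwd_out)
qed

lemma fwd_cfg_meet:
  assumes "eval T \<rho> \<mu>1 M \<mu>2 R" "cfg_le c (\<rho>, \<mu>1, M, T)" "cfg_le c' (\<rho>, \<mu>1, M, T)"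
  shows "fwd_cfg (cfg_meet c c') = out_meet (fwd_cfg c) (fwd_cfg c')"
  using assms fwd_out_meet[OF assms(1)] by (cases c; cases c') simp

theorem lemma4p4:
  assumes "eval T \<rho> \<mu>1 M \<mu>2 R"
    and "cfg_le x (\<rho>, \<mu>1, M, T)"
    and "cfg_le x' (\<rho>, \<mu>1, M, T)"
  shows "fwd (prefix_meet cfg_le (\<rho>, \<mu>1, M, T) x x')
           = prefix_meet out_le (\<mu>2, R) (fwd x) (fwd x')"
proof -
  have "cfg_le (cfg_meet x x') (\<rho>, \<mu>1, M, T)"
    using cfg_le_trans[OF cfg_meet_le1 assms(2)] .
  then have "fwd (prefix_meet cfg_le (\<rho>, \<mu>1, M, T) x x') = fwd_cfg (cfg_meet x x')"
    using prefix_meet_cfg[OF assms(2,3)] fwd_eq_fwd_cfg[OF assms(1)] by simp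
  also have "\<dots> = out_meet (fwd_cfg x) (fwd_cfg x')"
    using fwd_cfg_meet[OF assms] .
  also have "\<dots> = prefix_meet out_le (\<mu>2, R) (fwd_cfg x) (fwd_cfg x')"
    using prefix_meet_out fwd_cfg_below_eval[OF assms(1,2)] fwd_cfg_below_eval[OF assms(1,3)]
    by simp
  also have "\<dots> = prefix_meet out_le (\<mu>2, R) (fwd x) (fwd x')"
    using fwd_eq_fwd_cfg[OF assms(1,2)] fwd_eq_fwd_cfg[OF assms(1,3)] by simp
  finally show ?thesis .
qed

end
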